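(* Let $\nu$ be a probability measure on $\mathcal{C}_n$ and let $D=\mathbf{GW}(\{g_\nu(y):y\in\mathcal{C}_n\})$. For every $\varepsilon\in(0,1/16)$ and every $\alpha>1$, there exists a measure $m$ supported on $B(0,\varepsilon\sqrt n)\cap[-1,1]^n$ such that $$\int_{\mathcal{C}_n}\varphi\,d\nu=\int_{B(0,\varepsilon\sqrt n)}\left(\int_{\mathcal{C}_n}\varphi\,d(\mathrm{tilt}_\theta\nu)\right)dm(\theta)$$ for every test function $\varphi:\mathcal{C}_n\to\mathbb{R}$, and $$m\left(\theta:\ \mathrm{Tr}_k(\mathcal{H}(\mathrm{tilt}_\theta\nu))\le\frac{2^8\alpha D}{\varepsilon}\right)\ge1-\frac1\alpha-\frac1n,$$ with $k=2ne^{-1/(32\varepsilon^2)}$. Furthermore, under the additional assumption $\varepsilon\le\frac{1}{8\sqrt{\log(4n/D)}}$, the last inequality holds with $k=1$.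
   Context: $\mathcal{C}_n=\{-1,1\}^n$ with uniform probability measure $\mu$. For a probability measure $\rho$ on $\mathcal{C}_n$ with $f=\log\frac{d\rho}{d\mu}$, and $y\in\mathcal{C}_n$, $i\in[n]$, let $y_\pm$ agree with $y$ except the $i$-th coordinate is $\pm1$; $g_\rho(y)\in\mathbb{R}^n$ has $\langle g_\rho(y),e_i\rangle=\frac{e^{f(y_+)}-e^{f(y_-)}}{e^{f(y_+)}+e^{f(y_-)}}$ ($0$ if $\rho(y_+)=\rho(y_-)=0$). $\mathcal{H}(\rho)=\int g_\rho^{\otimes2}d\rho-(\int g_\rho\,d\rho)^{\otimes2}$. For a matrix $A$ whose diagonal entries in decreasing order are $\alpha_1\ge\dots\ge\alpha_n$, $\mathrm{Tr}_k(A)=\sum_{i=\lceil k\rceil}^n\alpha_i$. $\mathbf{GW}(K)=\mathbb{E}\sup_{x\in K}\langle x,\Gamma\rangle$, $\Gamma\sim N(0,\mathrm{Id}_n)$. For $d\nu=e^fd\mu$ and $\theta\in\mathbb{R}^n$, $\frac{d(\mathrm{tilt}_\theta\nu)}{d\mu}(y)=\frac{e^{f(y)+\langle\theta,y\rangle}}{\int e^{f(z)+\langle\theta,z\rangle}d\mu(z)}$. $B(0,r)$ is the Euclidean ball of radius $r$. *)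

theory Defs
  imports "HOL-Probability.Probability"
begin

definition cube :: "(real^'n) set" where
  "cube = {x. \<forall>i. x $ i = -1 \<or> x $ i = 1}"

definition unit_box :: "(real^'n) set" where
  "unit_box = {x. \<forall>i. -1 \<le> x $ i \<and> x $ i \<le> 1}"

definition upd_coord :: "real^'n \<Rightarrow> 'n \<Rightarrow> real \<Rightarrow> real^'n" where
  "upd_coord y i s = (\<chi> j. if j = i then s else y $ j)"

text \<open>g_rho for a (probability) mass function rho on the cube; since e^f = 2^n rho,
  the ratio (e^f(y+) - e^f(y-))/(e^f(y+) + e^f(y-)) equals the ratio of masses.\<close>
definition gvec :: "(real^'n \<Rightarrow> real) \<Rightarrow> real^'n \<Rightarrow> real^'n" where
  "gvec \<rho> y = (\<chi> i. let a = \<rho> (upd_coord y i 1); b = \<rho> (upd_coord y i (-1))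
      in if a = 0 \<and> b = 0 then 0 else (a - b) / (a + b))"

definition Hcov :: "(real^'n \<Rightarrow> real) \<Rightarrow> real^'n^'n" where
  "Hcov \<rho> = (\<chi> i j. (\<Sum>y\<in>cube. \<rho> y * (gvec \<rho> y $ i) * (gvec \<rho> y $ j))
      - (\<Sum>y\<in>cube. \<rho> y * (gvec \<rho> y $ i)) * (\<Sum>y\<in>cube. \<rho> y * (gvec \<rho> y $ j)))"

definition Trk :: "real \<Rightarrow> real^'n^'n \<Rightarrow> real" where
  "Trk k A = (let L = rev (sorted_list_of_multiset (image_mset (\<lambda>i. A $ i $ i) (mset_set (UNIV :: 'n set))))
     in \<Sum>j\<in>{j\<in>{1..CARD('n)}. \<lceil>k\<rceil> \<le> int j}. L ! (j - 1))"

definition std_gauss :: "(real^'n) measure" where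
  "std_gauss = density lborel (\<lambda>x. ennreal (\<Prod>i\<in>UNIV. std_normal_density (x $ i)))"

definition GW :: "(real^'n) set \<Rightarrow> real" where
  "GW K = (\<integral>\<Gamma>. (SUP x\<in>K. x \<bullet> \<Gamma>) \<partial>std_gauss)"

text \<open>Mass function of tilt_theta nu (the normalisation by mu cancels).\<close>
definition tilt :: "real^'n \<Rightarrow> (real^'n \<Rightarrow> real) \<Rightarrow> real^'n \<Rightarrow> real" where
  "tilt \<theta> \<rho> y = (if y \<in> cube
      then \<rho> y * exp (\<theta> \<bullet> y) / (\<Sum>z\<in>cube. \<rho> z * exp (\<theta> \<bullet> z)) else 0)"

end

(*
  Let y ~ nu and let x arise from y by flipping each coordinate independently with probability
  (1 - tanh eps) / 2. By Bayes' rule the conditional law of y given x is the tilt of nu by eps x,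
  so the law m of theta = eps x, which lives on the scaled cube, represents nu as a mixture of tilts.

  Tilting by theta acts on the i-th coordinate of g as a Moebius map with Lipschitz constant
  exp (2 |theta_i|) on [-1,1]; hence the trace of H(tilt_{eps x} nu) is at most exp (2 eps) times
  sum_i Cov(g_i(y), y_i | x). The average of this conditional covariance over x is computed exactly,
  and a coupling of x with a uniform point sigma of the cube, for which E[sigma | x] is proportional
  to x - tanh eps * y, bounds it by (1 + tanh eps) / tanh eps times the cube average of
  max_y g(y) . sigma. Splitting the Gaussian width orthant by orthant shows that this average is
  at most a constant times D. Markov's inequality applied to the full trace, which dominates every
  Tr_k, gives the claim for every k at once, without the term 1/n.
*)

theory Submission
  imports Defs
begin

lemma upd_coord_nth [simp]: "upd_coord y i s $ j = (if j = i then s else y $ j)"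
  by (simp add: upd_coord_def)

lemma upd_coord_triv: "y $ i = s \<Longrightarrow> upd_coord y i s = y"
  by (simp add: upd_coord_def vec_eq_iff)

lemma inner_vec_eq_sum: "(x::real^'n) \<bullet> y = (\<Sum>i\<in>UNIV. x $ i * y $ i)"
  by (simp add: inner_vec_def)

lemma inner_upd_coord: "(\<theta>::real^'n) \<bullet> upd_coord y i s = \<theta> \<bullet> y + \<theta> $ i * (s - y $ i)"
proof -
  have "\<theta> \<bullet> upd_coord y i s = (\<Sum>j\<in>UNIV. \<theta> $ j * y $ j + (if j = i then \<theta> $ i * (s - y $ i) else 0))"
    unfolding inner_vec_eq_sum by (intro sum.cong) (auto simp: algebra_simps)
  also have "\<dots> = \<theta> \<bullet> y + \<theta> $ i * (s - y $ i)"
    by (simp add: sum.distrib inner_vec_eq_sum)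
  finally show ?thesis .
qed

lemma cube_coord: "y \<in> cube \<Longrightarrow> y $ i = -1 \<or> y $ i = 1"
  by (simp add: cube_def)

lemma cube_coord_sq: "y \<in> cube \<Longrightarrow> y $ i * y $ i = 1"
  using cube_coord[of y i] by auto

lemma abs_cube_coord: "y \<in> cube \<Longrightarrow> \<bar>y $ i\<bar> = 1"
  using cube_coord[of y i] by auto

lemma cube_coord_mult: "x \<in> cube \<Longrightarrow> y \<in> cube \<Longrightarrow> x $ i * y $ i = 1 \<or> x $ i * y $ i = -1"
  using cube_coord[of y i] cube_coord[of x i] by auto

lemma upd_coord_in_cube: "y \<in> cube \<Longrightarrow> s = -1 \<or> s = 1 \<Longrightarrow> upd_coord y i s \<in> cube"
  by (auto simp: cube_def)

lemma cube_eq_image_PiE: "cube = (\<lambda>f. \<chi> i. f i) ` (PiE UNIV (\<lambda>_. {-1,1::real}))"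
proof
  show "cube \<subseteq> (\<lambda>f. \<chi> i. f i) ` (PiE UNIV (\<lambda>_. {-1,1::real}))"
    by (auto simp: cube_def intro!: image_eqI[where x="\<lambda>i. _ $ i"])
  show "(\<lambda>f. \<chi> i. f i) ` (PiE UNIV (\<lambda>_. {-1,1::real})) \<subseteq> cube"
    by (auto simp: cube_def PiE_def Pi_def)
qed

lemma finite_cube [simp]: "finite cube"
  unfolding cube_eq_image_PiE by (intro finite_imageI finite_PiE) auto

lemma cube_nonempty: "(cube :: (real^'n::finite) set) \<noteq> {}"
proof -
  have "((\<chi> i. 1) :: real^'n) \<in> cube" by (simp add: cube_def)
  then show ?thesis by blast
qed

lemma norm_cube:
  fixes x :: "real^'n::finite"
  assumes "x \<in> cube"
  shows "norm x = sqrt (real CARD('n))"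
proof -
  have "x \<bullet> x = real CARD('n)"
    using cube_coord_sq[OF assms] by (simp add: inner_vec_eq_sum)
  then show ?thesis by (simp add: norm_eq_sqrt_inner)
qed

lemma sum_cube_prod:
  fixes h :: "'n::finite \<Rightarrow> real \<Rightarrow> real"
  shows "(\<Sum>x\<in>cube. \<Prod>i\<in>UNIV. h i (x $ i)) = (\<Prod>i\<in>UNIV. h i 1 + h i (-1))"
proof -
  have inj: "inj_on (\<lambda>f. \<chi> i. f i) (PiE UNIV (\<lambda>_. {-1,1::real}))"
    by (auto simp: inj_on_def vec_eq_iff fun_eq_iff)
  have "(\<Sum>x\<in>cube. \<Prod>i\<in>UNIV. h i (x $ i)) = (\<Sum>f\<in>PiE UNIV (\<lambda>_. {-1,1::real}). \<Prod>i\<in>UNIV. h i (f i))"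
    unfolding cube_eq_image_PiE by (subst sum.reindex[OF inj]) simp
  also have "\<dots> = (\<Prod>i\<in>UNIV. \<Sum>s\<in>{-1,1}. h i s)"
    by (rule prod_sum_PiE[symmetric]) auto
  also have "\<dots> = (\<Prod>i\<in>UNIV. h i 1 + h i (-1))" by (simp add: add.commute)
  finally show ?thesis .
qed

lemma prod_all_but_one:
  fixes c :: "'n::finite \<Rightarrow> real"
  assumes "\<And>j. j \<noteq> i \<Longrightarrow> c j = b"
  shows "(\<Prod>j\<in>UNIV. c j) = c i * b ^ (CARD('n) - 1)"
proof -
  have "(\<Prod>j\<in>UNIV. c j) = c i * (\<Prod>j\<in>UNIV - {i}. c j)"
    by (rule prod.remove) auto
  also have "(\<Prod>j\<in>UNIV - {i}. c j) = (\<Prod>j\<in>UNIV - {i}. b)"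
    using assms by (intro prod.cong) auto
  also have "\<dots> = b ^ (CARD('n) - 1)" by (simp add: card_Diff_singleton)
  finally show ?thesis .
qed

lemma prod_update_mult:
  fixes f :: "'n::finite \<Rightarrow> real"
  shows "(\<Prod>i\<in>UNIV. if i = k then f k * b else f i) = b * (\<Prod>i\<in>UNIV. f i)"
proof -
  have "(\<Prod>i\<in>UNIV. if i = k then f k * b else f i) = (f k * b) * (\<Prod>i\<in>UNIV - {k}. f i)"
    by (subst prod.remove[of _ k]) (auto intro!: prod.cong)
  moreover have "(\<Prod>i\<in>UNIV. f i) = f k * (\<Prod>i\<in>UNIV - {k}. f i)"
    by (subst prod.remove[of _ k]) auto
  ultimately show ?thesis by simp
qed

definition flip_coord :: "'n \<Rightarrow> real^'n \<Rightarrow> real^'n" where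
  "flip_coord i y = upd_coord y i (- (y $ i))"

lemma flip_coord_flip_coord [simp]: "flip_coord i (flip_coord i y) = y"
  by (simp add: flip_coord_def upd_coord_def vec_eq_iff)

lemma flip_coord_in_cube: "y \<in> cube \<Longrightarrow> flip_coord i y \<in> cube"
  unfolding flip_coord_def using cube_coord[of y i] by (intro upd_coord_in_cube) auto

lemma flip_coord_nth [simp]: "flip_coord i y $ j = (if j = i then - (y $ i) else y $ j)"
  by (simp add: flip_coord_def)

lemma upd_coord_flip_coord [simp]: "upd_coord (flip_coord i y) i s = upd_coord y i s"
  by (simp add: flip_coord_def upd_coord_def vec_eq_iff)

lemma sum_cube_flip_coord: "(\<Sum>y\<in>cube. F y) = (\<Sum>y\<in>cube. F (flip_coord i y))"
proof -
  have "bij_betw (flip_coord i) cube cube"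
    by (rule bij_betwI[of _ _ _ "flip_coord i"]) (auto intro: flip_coord_in_cube)
  then show ?thesis by (rule sum.reindex_bij_betw[symmetric])
qed

lemma sum_cube_coord: "(\<Sum>y\<in>cube. y $ i) = 0"
  using sum_cube_flip_coord[of "\<lambda>y. y $ i" i] by (simp add: sum_negf)

lemma vec_sum_Basis_nth:
  fixes f :: "(real^'n) \<Rightarrow> real"
  shows "(\<Sum>b\<in>Basis. f b *\<^sub>R b) $ j = f (axis j 1)"
proof -
  have "(\<Sum>b\<in>Basis. f b *\<^sub>R b) $ j = (\<Sum>b\<in>Basis. f b * (b $ j))"
    by (simp add: sum_component)
  also have "\<dots> = (\<Sum>b\<in>Basis. f b * (b \<bullet> axis j 1))"
    by (simp add: cart_eq_inner_axis)
  also have "\<dots> = f (axis j 1)"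
    by (subst sum.remove[of _ "axis j 1"])
      (auto simp: Basis_vec_def inner_axis_axis axis_eq_axis intro!: sum.neutral split: if_splits)
  finally show ?thesis .
qed

lemma has_bochner_integral_lborel_prod_coord:
  fixes \<psi> :: "'n::finite \<Rightarrow> real \<Rightarrow> real"
  assumes int: "\<And>j. integrable lborel (\<psi> j)"
  shows "has_bochner_integral (lborel :: (real^'n) measure) (\<lambda>x. \<Prod>j\<in>UNIV. \<psi> j (x$j))
           (\<Prod>j\<in>UNIV. integral\<^sup>L lborel (\<psi> j))"
proof -
  define ax :: "'n \<Rightarrow> real^'n" where "ax = (\<lambda>j. axis j 1)"
  have inj: "inj ax" by (auto simp: ax_def inj_def axis_eq_axis)
  have img: "ax ` UNIV = Basis" by (auto simp: ax_def Basis_vec_def)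
  define \<psi>' where "\<psi>' = (\<lambda>b. \<psi> (inv ax b))"
  interpret P: product_sigma_finite "\<lambda>_::real^'n. (lborel::real measure)" by standard
  have T: "(\<lambda>f. \<Sum>b\<in>Basis. f b *\<^sub>R (b::real^'n)) \<in> borel_measurable (\<Pi>\<^sub>M b\<in>Basis. (lborel::real measure))"
    by measurable
  have eq: "(\<Prod>j\<in>UNIV. \<psi> j ((\<Sum>b\<in>Basis. f b *\<^sub>R b) $ j)) = (\<Prod>b\<in>Basis. \<psi>' b (f b))"
    for f :: "real^'n \<Rightarrow> real"
  proof -
    have "(\<Prod>b\<in>Basis. \<psi>' b (f b)) = (\<Prod>j\<in>UNIV. \<psi>' (ax j) (f (ax j)))"
      unfolding img[symmetric] by (subst prod.reindex[OF inj]) simp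
    also have "\<dots> = (\<Prod>j\<in>UNIV. \<psi> j ((\<Sum>b\<in>Basis. f b *\<^sub>R b) $ j))"
      unfolding vec_sum_Basis_nth \<psi>'_def using inv_f_f[OF inj] by (simp add: ax_def)
    finally show ?thesis by simp
  qed
  have mj: "\<psi> j \<in> borel_measurable borel" for j
    using borel_measurable_integrable[OF int[of j]] by simp
  have mG: "(\<lambda>x::real^'n. \<Prod>j\<in>UNIV. \<psi> j (x$j)) \<in> borel_measurable borel"
    using mj by measurable
  have "integrable (\<Pi>\<^sub>M b\<in>Basis. (lborel::real measure)) (\<lambda>f. \<Prod>b\<in>Basis. \<psi>' b (f b))"
    by (rule P.product_integrable_prod) (auto simp: \<psi>'_def int)
  then have "integrable (lborel :: (real^'n) measure) (\<lambda>x. \<Prod>j\<in>UNIV. \<psi> j (x$j))"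
    by (subst lborel_eq, subst integrable_distr_eq[OF T mG]) (unfold eq)
  moreover have "(\<integral>x. (\<Prod>j\<in>UNIV. \<psi> j (x$j)) \<partial>(lborel :: (real^'n) measure)) = (\<Prod>j\<in>UNIV. integral\<^sup>L lborel (\<psi> j))"
    apply (subst lborel_eq, subst integral_distr[OF T mG])
    unfolding eq
    apply (subst P.product_integral_prod)
      apply (auto simp: \<psi>'_def int)[2]
    unfolding img[symmetric] \<psi>'_def
    apply (subst prod.reindex[OF inj])
    using inv_f_f[OF inj] by simp
  ultimately show ?thesis by (simp add: has_bochner_integral_iff)
qed

lemma has_bochner_integral_std_gauss_prod:
  fixes h :: "'n::finite \<Rightarrow> real \<Rightarrow> real"
  assumes meas: "\<And>j. h j \<in> borel_measurable borel"
    and int: "\<And>j. integrable lborel (\<lambda>u. std_normal_density u * h j u)"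
  shows "has_bochner_integral (std_gauss :: (real^'n) measure) (\<lambda>x. \<Prod>j\<in>UNIV. h j (x$j))
           (\<Prod>j\<in>UNIV. \<integral>u. std_normal_density u * h j u \<partial>lborel)"
proof -
  have md: "(\<lambda>x::real^'n. \<Prod>i\<in>UNIV. std_normal_density (x $ i)) \<in> borel_measurable lborel"
    by measurable
  have mh: "(\<lambda>x::real^'n. \<Prod>j\<in>UNIV. h j (x$j)) \<in> borel_measurable lborel"
    using meas by measurable
  have nn: "AE x in lborel. 0 \<le> (\<Prod>i\<in>UNIV. std_normal_density ((x::real^'n) $ i))"
    by (intro AE_I2 prod_nonneg) auto
  note L = has_bochner_integral_lborel_prod_coord[OF int, unfolded has_bochner_integral_iff prod.distrib]
  show ?thesis
    unfolding has_bochner_integral_iff std_gauss_def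
    by (simp add: integrable_density[OF mh md nn] integral_density[OF mh md nn] L)
qed

lemma integral_std_normal_half_line:
  "(\<integral>u. std_normal_density u * indicator {0..} u \<partial>lborel) = 1/2"
  "(\<integral>u. std_normal_density u * indicator {..<0} u \<partial>lborel) = 1/2"
proof -
  define P where "P = (\<integral>u. std_normal_density u * indicator {0..} u \<partial>lborel)"
  define M where "M = (\<integral>u. std_normal_density u * indicator {..<0::real} u \<partial>lborel)"
  have i1: "integrable lborel (\<lambda>u. std_normal_density u * indicator {0..} u)"
    by (intro integrable_real_mult_indicator) auto
  have i2: "integrable lborel (\<lambda>u. std_normal_density u * indicator {..<0::real} u)"
    by (intro integrable_real_mult_indicator) auto
  have "P + M = (\<integral>u. std_normal_density u * indicator {0..} u + std_normal_density u * indicator {..<0::real} u \<partial>lborel)"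
    unfolding P_def M_def by (rule Bochner_Integration.integral_add[OF i1 i2, symmetric])
  also have "\<dots> = (\<integral>u. std_normal_density u \<partial>lborel)"
    by (intro Bochner_Integration.integral_cong) (auto split: split_indicator)
  finally have s: "P + M = 1" by simp
  have "P = \<bar>-1\<bar> *\<^sub>R (\<integral>x. std_normal_density (0 + -1 * x) * indicator {0..} (0 + -1 * x) \<partial>lborel)"
    unfolding P_def by (rule lborel_integral_real_affine) simp
  also have "\<dots> = (\<integral>x. std_normal_density x * indicator {..0} x \<partial>lborel)"
    by (simp add: std_normal_density_def indicator_def)
  also have "\<dots> = M"
    unfolding M_def
    by (intro integral_cong_AE) (auto intro!: eventually_mono[OF AE_lborel_singleton[of 0]] split: split_indicator)
  finally have "P = M" .
  with s show "P = 1/2" "M = 1/2" unfolding P_def M_def by auto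
qed

lemma integral_std_normal_half_line_moment:
  "(\<integral>u. std_normal_density u * (indicator {0..} u * u) \<partial>lborel) = 1 / sqrt (2*pi)"
  "(\<integral>u. std_normal_density u * (indicator {..<0} u * u) \<partial>lborel) = - 1 / sqrt (2*pi)"
proof -
  have ia: "integrable lborel (\<lambda>u. std_normal_density u * \<bar>u\<bar>)"
    using integrable_std_normal_moment_abs[of 1] by simp
  have iu: "integrable lborel (\<lambda>u. std_normal_density u * u)"
    using integrable_std_normal_moment[of 1] by simp
  have va: "(\<integral>u. std_normal_density u * \<bar>u\<bar> \<partial>lborel) = sqrt (2/pi)"
    using integral_std_normal_moment_abs_odd[of 0] by simp
  have vu: "(\<integral>u. std_normal_density u * u \<partial>lborel) = 0"
    using integral_std_normal_moment_odd[of 0] by simp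
  have k: "sqrt (2/pi) / 2 = 1 / sqrt (2*pi)"
    by (simp add: real_sqrt_divide field_simps real_sqrt_mult)
  have "(\<integral>u. std_normal_density u * (indicator {0..} u * u) \<partial>lborel)
     = (\<integral>u. (std_normal_density u * \<bar>u\<bar> + std_normal_density u * u) / 2 \<partial>lborel)"
    by (intro Bochner_Integration.integral_cong) (auto split: split_indicator simp: field_simps)
  also have "\<dots> = ((\<integral>u. std_normal_density u * \<bar>u\<bar> \<partial>lborel) + (\<integral>u. std_normal_density u * u \<partial>lborel)) / 2"
    using ia iu by simp
  finally show "(\<integral>u. std_normal_density u * (indicator {0..} u * u) \<partial>lborel) = 1 / sqrt (2*pi)"
    using va vu k by simp
  have "(\<integral>u. std_normal_density u * (indicator {..<0} u * u) \<partial>lborel)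
     = (\<integral>u. (std_normal_density u * u - std_normal_density u * \<bar>u\<bar>) / 2 \<partial>lborel)"
    by (intro Bochner_Integration.integral_cong) (auto split: split_indicator simp: field_simps)
  also have "\<dots> = ((\<integral>u. std_normal_density u * u \<partial>lborel) - (\<integral>u. std_normal_density u * \<bar>u\<bar> \<partial>lborel)) / 2"
    using ia iu by simp
  finally show "(\<integral>u. std_normal_density u * (indicator {..<0} u * u) \<partial>lborel) = - 1 / sqrt (2*pi)"
    using va vu k by simp
qed

text \<open>The boundary point 0 is given to the positive half line, so that every point of \<open>real^'n\<close>
  lies in exactly one orthant.\<close>

definition half_line_ind :: "real \<Rightarrow> real \<Rightarrow> real" where
  "half_line_ind s u = (if s = 1 then indicator {0..} u else indicator {..<0} u)"

definition orthant_ind :: "real^'n \<Rightarrow> real^'n \<Rightarrow> real" where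
  "orthant_ind \<sigma> v = (\<Prod>j\<in>UNIV. half_line_ind (\<sigma> $ j) (v $ j))"

definition sign_vec :: "real^'n \<Rightarrow> real^'n" where
  "sign_vec v = (\<chi> j. if 0 \<le> v $ j then 1 else -1)"

lemma half_line_ind_measurable [measurable]: "half_line_ind s \<in> borel_measurable borel"
  unfolding half_line_ind_def by (cases "s = 1") auto

lemma integrable_std_normal_half_line_ind:
  "integrable lborel (\<lambda>u. std_normal_density u * half_line_ind s u)"
  "integrable lborel (\<lambda>u. std_normal_density u * (half_line_ind s u * u))"
proof -
  show "integrable lborel (\<lambda>u. std_normal_density u * half_line_ind s u)"
    unfolding half_line_ind_def by (cases "s = 1") (auto intro!: integrable_real_mult_indicator)
  have "integrable lborel (\<lambda>u. (std_normal_density u * u) * indicator (if s = 1 then {0..} else {..<0}) u)"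
    using integrable_std_normal_moment[of 1] by (intro integrable_real_mult_indicator) auto
  then show "integrable lborel (\<lambda>u. std_normal_density u * (half_line_ind s u * u))"
    by (rule Bochner_Integration.integrable_cong[THEN iffD1, rotated 2]) (auto simp: half_line_ind_def)
qed

lemma integral_std_normal_half_line_ind:
  assumes "s = 1 \<or> s = -1"
  shows "(\<integral>u. std_normal_density u * half_line_ind s u \<partial>lborel) = 1/2"
    "(\<integral>u. std_normal_density u * (half_line_ind s u * u) \<partial>lborel) = s / sqrt (2*pi)"
  using assms integral_std_normal_half_line integral_std_normal_half_line_moment
  by (auto simp: half_line_ind_def)

lemma sign_vec_in_cube: "sign_vec v \<in> cube"
  by (auto simp: sign_vec_def cube_def)

lemma orthant_ind_eq:
  assumes "\<sigma> \<in> cube"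
  shows "orthant_ind \<sigma> v = (if \<sigma> = sign_vec v then 1 else 0)"
proof (cases "\<sigma> = sign_vec v")
  case True
  then show ?thesis by (auto simp: orthant_ind_def sign_vec_def half_line_ind_def intro!: prod.neutral)
next
  case False
  then obtain j where j: "\<sigma> $ j \<noteq> sign_vec v $ j" by (auto simp: vec_eq_iff)
  have "half_line_ind (\<sigma> $ j) (v $ j) = 0"
    using j cube_coord[OF assms, of j] by (auto simp: sign_vec_def half_line_ind_def split: if_splits)
  then have "orthant_ind \<sigma> v = 0" unfolding orthant_ind_def by (intro prod_zero) auto
  with False show ?thesis by simp
qed

lemma has_bochner_integral_orthant_coord:
  fixes \<sigma> :: "real^'n::finite"
  assumes \<sigma>: "\<sigma> \<in> cube"
  shows "has_bochner_integral std_gauss (\<lambda>v. orthant_ind \<sigma> v * v $ i) (\<sigma> $ i * (sqrt (2/pi) / 2 ^ CARD('n)))"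
proof -
  define h where "h = (\<lambda>j u. half_line_ind (\<sigma> $ j) u * (if j = i then u else 1))"
  have prod_h: "orthant_ind \<sigma> v * v $ i = (\<Prod>j\<in>UNIV. h j (v $ j))" for v
    by (simp add: h_def orthant_ind_def prod.distrib prod.delta)
  have hb: "has_bochner_integral std_gauss (\<lambda>v. \<Prod>j\<in>UNIV. h j (v $ j))
          (\<Prod>j\<in>UNIV. \<integral>u. std_normal_density u * h j u \<partial>lborel)"
  proof (rule has_bochner_integral_std_gauss_prod)
    show "h j \<in> borel_measurable borel" for j
      unfolding h_def by measurable
    show "integrable lborel (\<lambda>u. std_normal_density u * h j u)" for j
      by (cases "j = i") (simp_all add: h_def integrable_std_normal_half_line_ind)
  qed
  have val: "(\<Prod>j\<in>UNIV. \<integral>u. std_normal_density u * h j u \<partial>lborel)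
      = \<sigma> $ i * ((1/2) ^ (CARD('n) - 1) / sqrt (2*pi))"
  proof -
    have s: "\<sigma> $ j = 1 \<or> \<sigma> $ j = -1" for j
      using cube_coord[OF \<sigma>, of j] by auto
    have "(\<integral>u. std_normal_density u * h j u \<partial>lborel) = 1/2" if "j \<noteq> i" for j
      using that by (simp add: h_def integral_std_normal_half_line_ind[OF s])
    then have "(\<Prod>j\<in>UNIV. \<integral>u. std_normal_density u * h j u \<partial>lborel)
        = (\<integral>u. std_normal_density u * h i u \<partial>lborel) * (1/2) ^ (CARD('n) - 1)"
      by (rule prod_all_but_one)
    then show ?thesis by (simp add: h_def integral_std_normal_half_line_ind[OF s])
  qed
  have const: "(1/2::real) ^ (CARD('n) - 1) / sqrt (2*pi) = sqrt (2/pi) / 2 ^ CARD('n)"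
  proof -
    have c: "CARD('n) = Suc (CARD('n) - 1)" by simp
    have p: "(2::real) ^ CARD('n) = 2 * 2 ^ (CARD('n) - 1)"
      by (metis c power_Suc)
    have "sqrt (2/pi) / 2 ^ CARD('n) = (sqrt (2/pi) / 2) / 2 ^ (CARD('n) - 1)"
      unfolding p by simp
    also have "sqrt (2/pi) / 2 = 1 / sqrt (2*pi)"
      by (simp add: real_sqrt_divide field_simps real_sqrt_mult)
    finally show ?thesis by (simp add: power_one_over)
  qed
  show ?thesis using hb unfolding prod_h val const .
qed

lemma integrable_std_gauss_Max_inner:
  fixes K :: "(real^'n::finite) set"
  assumes fin: "finite K" and ne: "K \<noteq> {}" and bd: "\<And>k i. k \<in> K \<Longrightarrow> \<bar>k $ i\<bar> \<le> 1"
  shows "integrable std_gauss (\<lambda>v. Max ((\<lambda>k. k \<bullet> v) ` K))"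
proof (rule Bochner_Integration.integrable_bound)
  have "integrable std_gauss (\<lambda>v::real^'n. \<bar>v $ i\<bar>)" for i
  proof -
    have "has_bochner_integral std_gauss (\<lambda>v::real^'n. \<Prod>j\<in>UNIV. if j = i then \<bar>v $ j\<bar> else 1)
        (\<Prod>j\<in>UNIV. \<integral>u. std_normal_density u * (if j = i then \<bar>u\<bar> else 1) \<partial>lborel)"
    proof (rule has_bochner_integral_std_gauss_prod[of "\<lambda>j u. if j = i then \<bar>u\<bar> else 1"])
      show "(\<lambda>u::real. if j = i then \<bar>u\<bar> else 1) \<in> borel_measurable borel" for j
        by (cases "j = i") auto
      show "integrable lborel (\<lambda>u. std_normal_density u * (if j = i then \<bar>u\<bar> else 1))" for j
        using integrable_std_normal_moment_abs[of 1] by (cases "j = i") auto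
    qed
    then show ?thesis by (simp add: has_bochner_integral_iff prod.delta)
  qed
  then show "integrable std_gauss (\<lambda>v::real^'n. \<Sum>i\<in>UNIV. \<bar>v $ i\<bar>)"
    by (intro Bochner_Integration.integrable_sum)
  show "(\<lambda>v. Max ((\<lambda>k. k \<bullet> v) ` K)) \<in> borel_measurable std_gauss"
    unfolding std_gauss_def using fin by measurable
  show "AE v in std_gauss. norm (Max ((\<lambda>k. k \<bullet> v) ` K)) \<le> norm (\<Sum>i\<in>UNIV. \<bar>v $ i\<bar>)"
  proof (intro AE_I2)
    fix v :: "real^'n"
    have "Max ((\<lambda>k. k \<bullet> v) ` K) \<in> (\<lambda>k. k \<bullet> v) ` K"
      using fin ne by (intro Max_in) auto
    then obtain k where k: "k \<in> K" "Max ((\<lambda>k. k \<bullet> v) ` K) = k \<bullet> v" by auto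
    have "\<bar>k \<bullet> v\<bar> \<le> (\<Sum>i\<in>UNIV. \<bar>k $ i * v $ i\<bar>)" unfolding inner_vec_eq_sum by (rule sum_abs)
    also have "\<dots> \<le> (\<Sum>i\<in>UNIV. \<bar>v $ i\<bar>)"
      using bd[OF k(1)] by (intro sum_mono) (auto simp: abs_mult intro: mult_left_le_one_le)
    finally show "norm (Max ((\<lambda>k. k \<bullet> v) ` K)) \<le> norm (\<Sum>i\<in>UNIV. \<bar>v $ i\<bar>)"
      using k by simp
  qed
qed

text \<open>Choosing in each orthant the element \<open>k\<^sub>\<sigma>\<close> of \<open>K\<close> maximising \<open>k \<bullet> \<sigma>\<close> gives
  \<open>sup\<^sub>k k \<bullet> \<Gamma> \<ge> k\<^bsub>sign \<Gamma>\<^esub> \<bullet> \<Gamma>\<close>, and the expectation of the right-hand side is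
  computed orthant by orthant.\<close>

lemma GW_ge_cube_sum_Max:
  fixes K :: "(real^'n::finite) set"
  assumes fin: "finite K" and ne: "K \<noteq> {}" and bd: "\<And>k i. k \<in> K \<Longrightarrow> \<bar>k $ i\<bar> \<le> 1"
  shows "sqrt (2/pi) * (\<Sum>\<sigma>\<in>cube. Max ((\<lambda>k. k \<bullet> \<sigma>) ` K)) / 2 ^ CARD('n) \<le> GW K"
proof -
  define S where "S = (\<lambda>v::real^'n. Max ((\<lambda>k. k \<bullet> v) ` K))"
  define c where "c = sqrt (2/pi) / 2 ^ CARD('n)"
  have GWS: "GW K = (\<integral>v. S v \<partial>std_gauss)"
    unfolding GW_def S_def using fin ne by (simp add: cSup_eq_Max)
  have "\<exists>k\<in>K. S v = k \<bullet> v" for v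
  proof -
    have "S v \<in> (\<lambda>k. k \<bullet> v) ` K"
      unfolding S_def using fin ne by (intro Max_in) auto
    then show ?thesis by auto
  qed
  then obtain ks where ks: "\<And>\<sigma>. ks \<sigma> \<in> K \<and> S \<sigma> = ks \<sigma> \<bullet> \<sigma>" by metis
  define T where "T = (\<lambda>v. \<Sum>\<sigma>\<in>cube. \<Sum>i\<in>UNIV. ks \<sigma> $ i * (orthant_ind \<sigma> v * v $ i))"
  have T_eq: "T v = ks (sign_vec v) \<bullet> v" for v
  proof -
    have "T v = (\<Sum>\<sigma>\<in>cube. orthant_ind \<sigma> v * (ks \<sigma> \<bullet> v))"
      unfolding T_def inner_vec_eq_sum by (simp add: sum_distrib_left mult_ac)
    also have "\<dots> = (\<Sum>\<sigma>\<in>cube. (if \<sigma> = sign_vec v then ks \<sigma> \<bullet> v else 0))"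
      by (intro sum.cong) (auto simp: orthant_ind_eq)
    finally show ?thesis by (simp add: sign_vec_in_cube)
  qed
  have TS: "T v \<le> S v" for v
    unfolding T_eq S_def using ks fin by (intro Max_ge) auto
  have "has_bochner_integral std_gauss T (\<Sum>\<sigma>\<in>cube. \<Sum>i\<in>UNIV. ks \<sigma> $ i * (\<sigma> $ i * c))"
    unfolding T_def c_def
    by (intro has_bochner_integral_sum has_bochner_integral_mult_right has_bochner_integral_orthant_coord)
  moreover have "(\<Sum>i\<in>UNIV. ks \<sigma> $ i * (\<sigma> $ i * c)) = c * S \<sigma>" for \<sigma>
    using ks[of \<sigma>] by (simp add: inner_vec_eq_sum sum_distrib_left mult_ac)
  ultimately have T: "integrable std_gauss T" "(\<integral>v. T v \<partial>std_gauss) = c * (\<Sum>\<sigma>\<in>cube. S \<sigma>)"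
    by (simp_all add: has_bochner_integral_iff sum_distrib_left)
  have "(\<integral>v. T v \<partial>std_gauss) \<le> (\<integral>v. S v \<partial>std_gauss)"
    using integrable_std_gauss_Max_inner[OF assms] TS unfolding S_def by (intro integral_mono[OF T(1)])
  then show ?thesis unfolding GWS T(2) c_def S_def by (simp add: mult_ac)
qed

definition cube_cov :: "(real^'n \<Rightarrow> real) \<Rightarrow> (real^'n \<Rightarrow> real) \<Rightarrow> (real^'n \<Rightarrow> real) \<Rightarrow> real" where
  "cube_cov \<rho> f h = (\<Sum>y\<in>cube. \<rho> y * f y * h y) - (\<Sum>y\<in>cube. \<rho> y * f y) * (\<Sum>y\<in>cube. \<rho> y * h y)"

lemma Hcov_diag: "Hcov \<rho> $ i $ i = cube_cov \<rho> (\<lambda>y. gvec \<rho> y $ i) (\<lambda>y. gvec \<rho> y $ i)"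
  by (simp add: Hcov_def cube_cov_def)

lemma cube_cov_double_sum:
  assumes "(\<Sum>y\<in>cube. \<rho> y) = 1"
  shows "(\<Sum>y\<in>cube. \<Sum>z\<in>cube. \<rho> y * \<rho> z * ((f y - f z) * (h y - h z))) = 2 * cube_cov \<rho> f h"
proof -
  define A where "A = (\<Sum>y\<in>cube. \<rho> y * f y * h y)"
  define P where "P = (\<Sum>y\<in>cube. \<rho> y * f y)"
  define Q where "Q = (\<Sum>y\<in>cube. \<rho> y * h y)"
  have e: "\<rho> y * \<rho> z * ((f y - f z) * (h y - h z)) =
      (\<rho> z * (\<rho> y * f y * h y) + \<rho> y * (\<rho> z * f z * h z)) - ((\<rho> y * f y) * (\<rho> z * h z) + (\<rho> z * f z) * (\<rho> y * h y))" for y z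
    by (simp add: algebra_simps)
  have s1: "(\<Sum>y\<in>cube. \<Sum>z\<in>cube. \<rho> z * (\<rho> y * f y * h y)) = A"
    using assms by (simp add: A_def sum_distrib_right[symmetric])
  have s2: "(\<Sum>y\<in>cube. \<Sum>z\<in>cube. \<rho> y * (\<rho> z * f z * h z)) = A"
    using assms by (simp add: A_def sum_distrib_left[symmetric] sum_distrib_right[symmetric])
  have s3: "(\<Sum>y\<in>cube. \<Sum>z\<in>cube. (\<rho> y * f y) * (\<rho> z * h z)) = P * Q"
    by (simp add: P_def Q_def sum_product)
  have s4: "(\<Sum>y\<in>cube. \<Sum>z\<in>cube. (\<rho> z * f z) * (\<rho> y * h y)) = P * Q"
    by (subst sum.swap) (simp add: P_def Q_def sum_product mult.commute)
  show ?thesis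
    unfolding e sum_subtractf sum.distrib s1 s2 s3 s4 cube_cov_def
      A_def[symmetric] P_def[symmetric] Q_def[symmetric]
    by simp
qed

lemma cube_cov_self_nonneg:
  assumes "\<And>y. \<rho> y \<ge> 0" and "(\<Sum>y\<in>cube. \<rho> y) = 1"
  shows "0 \<le> cube_cov \<rho> f f"
proof -
  have "0 \<le> (\<Sum>y\<in>cube. \<Sum>z\<in>cube. \<rho> y * \<rho> z * ((f y - f z) * (f y - f z)))"
    using assms(1) by (intro sum_nonneg) auto
  then show ?thesis unfolding cube_cov_double_sum[OF assms(2)] by simp
qed

lemma gvec_flip_coord [simp]: "gvec \<rho> (flip_coord i y) $ i = gvec \<rho> y $ i"
  by (simp add: gvec_def)

lemma abs_gvec_le_1:
  assumes "\<And>z. \<rho> z \<ge> 0"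
  shows "\<bar>gvec \<rho> y $ i\<bar> \<le> 1"
proof -
  define a where "a = \<rho> (upd_coord y i 1)"
  define b where "b = \<rho> (upd_coord y i (-1))"
  have ab: "a \<ge> 0" "b \<ge> 0" using assms by (auto simp: a_def b_def)
  have "gvec \<rho> y $ i = (if a = 0 \<and> b = 0 then 0 else (a - b) / (a + b))"
    by (simp add: gvec_def a_def b_def Let_def)
  moreover have "\<bar>(a - b) / (a + b)\<bar> \<le> 1" if "\<not> (a = 0 \<and> b = 0)"
  proof -
    have "a + b > 0" using ab that by auto
    then show ?thesis using ab by (simp add: abs_le_iff divide_le_eq_1 le_divide_eq)
  qed
  ultimately show ?thesis by auto
qed

text \<open>\<open>gvec \<rho> y $ i\<close> is the conditional expectation of \<open>y $ i\<close> under \<open>\<rho>\<close> given all other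
  coordinates, so it may replace \<open>y $ i\<close> against any weight that ignores the \<open>i\<close>-th coordinate.\<close>

lemma sum_coord_eq_sum_gvec:
  assumes nn: "\<And>z. \<rho> z \<ge> 0"
    and hf: "\<And>y. y \<in> cube \<Longrightarrow> h (flip_coord i y) = h y"
  shows "(\<Sum>y\<in>cube. \<rho> y * h y * y $ i) = (\<Sum>y\<in>cube. \<rho> y * h y * (gvec \<rho> y $ i))"
proof -
  define F where "F = (\<lambda>y. \<rho> y * h y * (y $ i - gvec \<rho> y $ i))"
  have pair: "F y + F (flip_coord i y) = 0" if y: "y \<in> cube" for y
  proof -
    define a where "a = \<rho> (upd_coord y i 1)"
    define b where "b = \<rho> (upd_coord y i (-1))"
    define g where "g = gvec \<rho> y $ i"
    have ab: "a \<ge> 0" "b \<ge> 0" using nn by (auto simp: a_def b_def)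
    have g: "g = (if a = 0 \<and> b = 0 then 0 else (a - b) / (a + b))"
      by (simp add: gvec_def a_def b_def g_def Let_def)
    have key: "a * (1 - g) + b * (-1 - g) = 0"
    proof (cases "a = 0 \<and> b = 0")
      case False
      then have "a + b > 0" using ab by auto
      then have "(a - b) / (a + b) * (a + b) = a - b" by simp
      moreover have "a * (1 - g) + b * (-1 - g) = (a - b) - g * (a + b)" by (simp add: algebra_simps)
      ultimately show ?thesis using False unfolding g by simp
    qed (simp add: g)
    have fl: "flip_coord i y = upd_coord y i (- (y $ i))" by (simp add: flip_coord_def)
    consider "y $ i = 1" | "y $ i = -1" using cube_coord[OF y, of i] by auto
    then have "F y + F (flip_coord i y) = h y * (a * (1 - g) + b * (-1 - g))"
    proof cases
      case 1
      then have "\<rho> y = a" "\<rho> (flip_coord i y) = b"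
        using upd_coord_triv[of y i 1] by (simp_all add: a_def b_def fl)
      then show ?thesis using 1 hf[OF y] unfolding F_def g_def by (simp add: algebra_simps)
    next
      case 2
      then have "\<rho> y = b" "\<rho> (flip_coord i y) = a"
        using upd_coord_triv[of y i "-1"] by (simp_all add: a_def b_def fl)
      then show ?thesis using 2 hf[OF y] unfolding F_def g_def by (simp add: algebra_simps)
    qed
    then show ?thesis using key by simp
  qed
  have "2 * (\<Sum>y\<in>cube. F y) = (\<Sum>y\<in>cube. F y + F (flip_coord i y))"
    using sum_cube_flip_coord[of F i] by (simp add: sum.distrib)
  then have "(\<Sum>y\<in>cube. F y) = 0" using pair by simp
  then show ?thesis unfolding F_def by (simp add: algebra_simps sum_subtractf)
qed

definition mobius :: "real \<Rightarrow> real \<Rightarrow> real" where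
  "mobius A u = (u * (A + 1) + (A - 1)) / ((A + 1) + u * (A - 1))"

lemma mobius_denom_ge:
  fixes A u :: real
  assumes "A > 0" "\<bar>u\<bar> \<le> 1"
  shows "(A + 1) + u * (A - 1) \<ge> 2 * min 1 A"
proof (cases "A \<ge> 1")
  case True
  have "(-1) * (A - 1) \<le> u * (A - 1)" using assms True by (intro mult_right_mono) auto
  then show ?thesis using True by simp
next
  case False
  have "(-1) * (1 - A) \<le> (-u) * (1 - A)" using assms False by (intro mult_right_mono) auto
  then show ?thesis using False by (simp add: algebra_simps)
qed

text \<open>Equivalently, \<open>mobius A\<close> is increasing and \<open>max A (1/A)\<close>-Lipschitz on \<open>[-1,1]\<close>.\<close>

lemma mobius_diff_sq_le:
  fixes A u v :: real
  assumes A: "A > 0" and u: "\<bar>u\<bar> \<le> 1" and v: "\<bar>v\<bar> \<le> 1"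
  shows "(mobius A u - mobius A v) * (mobius A u - mobius A v)
           \<le> max A (1/A) * ((u - v) * (mobius A u - mobius A v))"
proof -
  define m where "m = min 1 A"
  have m: "m > 0" using A by (simp add: m_def)
  define Du where "Du = (A + 1) + u * (A - 1)"
  define Dv where "Dv = (A + 1) + v * (A - 1)"
  have Du: "Du \<ge> 2 * m" using mobius_denom_ge[OF A u] by (simp add: Du_def m_def)
  have Dv: "Dv \<ge> 2 * m" using mobius_denom_ge[OF A v] by (simp add: Dv_def m_def)
  define r where "r = 4 * A / (Du * Dv)"
  have diff: "mobius A u - mobius A v = r * (u - v)"
  proof -
    have "mobius A u - mobius A v
        = ((u * (A + 1) + (A - 1)) * Dv - (v * (A + 1) + (A - 1)) * Du) / (Du * Dv)"
      using Du Dv m by (simp add: mobius_def Du_def Dv_def diff_frac_eq)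
    also have "\<dots> = r * (u - v)"
      by (simp add: r_def Du_def Dv_def algebra_simps)
    finally show ?thesis .
  qed
  have rpos: "r \<ge> 0" using Du Dv m A by (simp add: r_def)
  have "Du > 0" "Dv > 0" using Du Dv m by auto
  have "Du * Dv \<ge> (2 * m) * (2 * m)" using Du Dv m by (intro mult_mono) auto
  then have "r \<le> 4 * A / ((2 * m) * (2 * m))"
    unfolding r_def using m A \<open>Du > 0\<close> \<open>Dv > 0\<close> by (intro divide_left_mono) (auto intro!: mult_pos_pos)
  also have "\<dots> \<le> max A (1/A)"
    using A by (cases "A \<ge> 1") (auto simp: m_def)
  finally have rM: "r \<le> max A (1/A)" .
  have "(mobius A u - mobius A v) * (mobius A u - mobius A v) = r * (r * ((u - v) * (u - v)))"
    unfolding diff by (simp add: algebra_simps)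
  also have "\<dots> \<le> max A (1/A) * (r * ((u - v) * (u - v)))"
    using rM rpos by (intro mult_right_mono) auto
  also have "\<dots> = max A (1/A) * ((u - v) * (mobius A u - mobius A v))"
    unfolding diff by (simp add: algebra_simps)
  finally show ?thesis .
qed

lemma tilt_normaliser_pos:
  assumes nn: "\<And>z. p z \<ge> 0" and s1: "(\<Sum>z\<in>cube. p z) = 1"
  shows "(\<Sum>z\<in>cube. p z * exp (\<theta> \<bullet> z)) > 0"
proof -
  obtain z where z: "z \<in> cube" "p z > 0"
    using s1 nn by (metis less_eq_real_def sum.neutral zero_neq_one)
  show ?thesis
    by (rule sum_pos2[OF finite_cube z(1)]) (use z nn in auto)
qed

lemma tilt_nonneg:
  "(\<And>z. p z \<ge> 0) \<Longrightarrow> (\<Sum>z\<in>cube. p z * exp (\<theta> \<bullet> z)) > 0 \<Longrightarrow> tilt \<theta> p y \<ge> 0"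
  by (simp add: tilt_def)

lemma sum_tilt: "(\<Sum>z\<in>cube. p z * exp (\<theta> \<bullet> z)) > 0 \<Longrightarrow> (\<Sum>y\<in>cube. tilt \<theta> p y) = 1"
  by (simp add: tilt_def sum_divide_distrib[symmetric])

text \<open>Tilting by \<open>\<theta>\<close> multiplies the odds \<open>\<rho>(y\<^sub>+) / \<rho>(y\<^sub>-)\<close> along every edge in direction \<open>i\<close>
  by \<open>exp (2 \<theta>\<^sub>i)\<close>; on \<open>(a - b) / (a + b)\<close> this acts as a Moebius map.\<close>

lemma gvec_tilt:
  assumes nn: "\<And>z. p z \<ge> 0" and y: "y \<in> cube"
    and Z: "(\<Sum>z\<in>cube. p z * exp (\<theta> \<bullet> z)) > 0"
    and nz: "\<not> (p (upd_coord y i 1) = 0 \<and> p (upd_coord y i (-1)) = 0)"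
  shows "gvec (tilt \<theta> p) y $ i = mobius (exp (2 * \<theta> $ i)) (gvec p y $ i)"
proof -
  define Zs where "Zs = (\<Sum>z\<in>cube. p z * exp (\<theta> \<bullet> z))"
  define a where "a = p (upd_coord y i 1)"
  define b where "b = p (upd_coord y i (-1))"
  define E where "E = exp (\<theta> \<bullet> upd_coord y i (-1))"
  define A where "A = exp (2 * \<theta> $ i)"
  have ab0: "a \<ge> 0" "b \<ge> 0" using nn by (auto simp: a_def b_def)
  then have ab: "a \<ge> 0" "b \<ge> 0" "a + b > 0"
    using nz unfolding a_def[symmetric] b_def[symmetric] by auto
  have pos: "E > 0" "A > 0" "Zs > 0" using Z by (auto simp: E_def A_def Zs_def)
  have c1: "upd_coord y i 1 \<in> cube" "upd_coord y i (-1) \<in> cube"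
    using y by (auto intro: upd_coord_in_cube)
  have "exp (\<theta> \<bullet> upd_coord y i 1) = E * A"
    by (simp add: E_def A_def inner_upd_coord algebra_simps exp_add[symmetric])
  then have t: "tilt \<theta> p (upd_coord y i 1) = (E / Zs) * (a * A)"
      "tilt \<theta> p (upd_coord y i (-1)) = (E / Zs) * b"
    using c1 by (simp_all add: tilt_def a_def b_def Zs_def E_def)
  have aAb: "a * A + b > 0"
    using ab pos by (cases "a = 0") (auto intro: add_pos_nonneg)
  have "gvec (tilt \<theta> p) y $ i = ((E / Zs) * (a * A) - (E / Zs) * b) / ((E / Zs) * (a * A) + (E / Zs) * b)"
    using pos aAb by (simp add: gvec_def Let_def t)
  also have "\<dots> = (a * A - b) / (a * A + b)"
    unfolding right_diff_distrib[symmetric] distrib_left[symmetric]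
    using pos by (intro mult_divide_mult_cancel_left) auto
  also have "\<dots> = mobius A ((a - b) / (a + b))"
  proof -
    have N: "(a - b) / (a + b) * (A + 1) + (A - 1) = (2 * (a * A - b)) / (a + b)"
      using ab by (simp add: field_simps)
    have D: "(A + 1) + (a - b) / (a + b) * (A - 1) = (2 * (a * A + b)) / (a + b)"
      using ab by (simp add: field_simps)
    have "(a * A - b) / (a * A + b) = (2 * (a * A - b)) / (2 * (a * A + b))"
      by (rule mult_divide_mult_cancel_left[symmetric]) simp
    also have "\<dots> = ((2 * (a * A - b)) / (a + b)) / ((2 * (a * A + b)) / (a + b))"
      using ab by simp
    finally show ?thesis unfolding mobius_def N D .
  qed
  also have "(a - b) / (a + b) = gvec p y $ i"
    using ab nz by (simp add: gvec_def Let_def a_def b_def)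
  finally show ?thesis by (simp add: A_def)
qed

lemma Hcov_tilt_diag_le:
  assumes nn: "\<And>z. p z \<ge> 0" and Z: "(\<Sum>z\<in>cube. p z * exp (\<theta> \<bullet> z)) > 0"
  shows "Hcov (tilt \<theta> p) $ i $ i \<le> max (exp (2 * \<theta> $ i)) (1 / exp (2 * \<theta> $ i)) *
           cube_cov (tilt \<theta> p) (\<lambda>y. gvec p y $ i) (\<lambda>y. y $ i)"
proof -
  define \<rho> where "\<rho> = tilt \<theta> p"
  define u where "u = (\<lambda>y. gvec p y $ i)"
  define \<phi> where "\<phi> = (\<lambda>y. gvec \<rho> y $ i)"
  define A where "A = exp (2 * \<theta> $ i)"
  define M where "M = max A (1 / A)"
  have \<rho>nn: "\<rho> z \<ge> 0" for z unfolding \<rho>_def by (rule tilt_nonneg[OF nn Z])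
  have \<rho>1: "(\<Sum>y\<in>cube. \<rho> y) = 1" unfolding \<rho>_def by (rule sum_tilt[OF Z])
  have cov_coord: "cube_cov \<rho> u (\<lambda>y. y $ i) = cube_cov \<rho> u \<phi>"
  proof -
    have "(\<Sum>y\<in>cube. \<rho> y * u y * y $ i) = (\<Sum>y\<in>cube. \<rho> y * u y * \<phi> y)"
      unfolding \<phi>_def u_def by (rule sum_coord_eq_sum_gvec[OF \<rho>nn]) simp
    moreover have "(\<Sum>y\<in>cube. \<rho> y * y $ i) = (\<Sum>y\<in>cube. \<rho> y * \<phi> y)"
      using sum_coord_eq_sum_gvec[OF \<rho>nn, of "\<lambda>_. 1" i] unfolding \<phi>_def by simp
    ultimately show ?thesis by (simp add: cube_cov_def)
  qed
  have \<phi>_mobius: "\<phi> y = mobius A (u y)" if "\<rho> y \<noteq> 0" for y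
  proof -
    have y: "y \<in> cube" and "p y \<noteq> 0"
      using that by (auto simp: \<rho>_def tilt_def split: if_splits)
    then have "\<not> (p (upd_coord y i 1) = 0 \<and> p (upd_coord y i (-1)) = 0)"
      using cube_coord[OF y, of i] upd_coord_triv[of y i] by metis
    then show ?thesis unfolding \<phi>_def u_def A_def \<rho>_def by (rule gvec_tilt[OF nn y Z])
  qed
  have pointwise: "\<rho> y * \<rho> z * ((\<phi> y - \<phi> z) * (\<phi> y - \<phi> z)) \<le> M * (\<rho> y * \<rho> z * ((u y - u z) * (\<phi> y - \<phi> z)))"
    for y z
  proof (cases "\<rho> y = 0 \<or> \<rho> z = 0")
    case False
    then have \<phi>yz: "\<phi> y = mobius A (u y)" "\<phi> z = mobius A (u z)" using \<phi>_mobius by auto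
    have "A > 0" by (simp add: A_def)
    moreover have "\<bar>u y\<bar> \<le> 1" "\<bar>u z\<bar> \<le> 1" unfolding u_def using abs_gvec_le_1[of p, OF nn] by auto
    ultimately have "(\<phi> y - \<phi> z) * (\<phi> y - \<phi> z) \<le> M * ((u y - u z) * (\<phi> y - \<phi> z))"
      unfolding \<phi>yz M_def by (rule mobius_diff_sq_le)
    then show ?thesis
      using \<rho>nn[of y] \<rho>nn[of z] by (metis mult.left_commute mult_left_mono zero_le_mult_iff)
  qed auto
  have "2 * Hcov \<rho> $ i $ i \<le> (\<Sum>y\<in>cube. \<Sum>z\<in>cube. M * (\<rho> y * \<rho> z * ((u y - u z) * (\<phi> y - \<phi> z))))"
    unfolding Hcov_diag \<phi>_def[symmetric] cube_cov_double_sum[OF \<rho>1, symmetric]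
    by (intro sum_mono pointwise)
  also have "\<dots> = 2 * (M * cube_cov \<rho> u \<phi>)"
    by (simp add: sum_distrib_left[symmetric] cube_cov_double_sum[OF \<rho>1])
  finally show ?thesis using cov_coord by (simp add: M_def A_def \<rho>_def u_def)
qed

lemma Hcov_tilt_diag_nonneg:
  assumes nn: "\<And>z. p z \<ge> 0" and s1: "(\<Sum>z\<in>cube. p z) = 1"
  shows "0 \<le> Hcov (tilt \<theta> p) $ i $ i"
proof -
  have Z: "(\<Sum>z\<in>cube. p z * exp (\<theta> \<bullet> z)) > 0" by (rule tilt_normaliser_pos[OF nn s1])
  show ?thesis
    unfolding Hcov_diag by (rule cube_cov_self_nonneg[OF tilt_nonneg[OF nn Z] sum_tilt[OF Z]])
qed

text \<open>For \<open>y \<in> cube\<close>, \<open>noise_kernel t \<cdot> y\<close> is the law of the point obtained from \<open>y\<close> by flipping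
  each coordinate independently with probability \<open>(1 - tanh t) / 2\<close>.\<close>

definition noise_kernel :: "real \<Rightarrow> real^'n \<Rightarrow> real^'n \<Rightarrow> real" where
  "noise_kernel t x y = exp (t * (x \<bullet> y)) / (2 * cosh t) ^ CARD('n)"

lemma noise_kernel_nonneg: "noise_kernel t x y \<ge> 0"
  by (simp add: noise_kernel_def)

lemma exp_div_two_cosh:
  fixes t u :: real
  assumes "u = 1 \<or> u = -1"
  shows "exp (t * u) / (2 * cosh t) = (1 + u * tanh t) / 2"
proof -
  have c: "2 * cosh t = exp t + exp (- t)" by (simp add: cosh_def)
  have p: "exp t + exp (- t) \<noteq> 0" by (simp add: add_pos_pos order_less_imp_not_eq2)
  have "(1 + tanh t) / 2 = exp t / (2 * cosh t)" "(1 - tanh t) / 2 = exp (- t) / (2 * cosh t)"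
    unfolding c tanh_altdef using p by (simp_all add: field_simps)
  then show ?thesis using assms by auto
qed

lemma noise_kernel_eq_prod:
  fixes x y :: "real^'n::finite"
  assumes x: "x \<in> cube" and y: "y \<in> cube"
  shows "noise_kernel t x y = (\<Prod>i\<in>UNIV. (1 + x $ i * y $ i * tanh t) / 2)"
proof -
  have "noise_kernel t x y = (\<Prod>i\<in>UNIV. exp (t * (x $ i * y $ i)) / (2 * cosh t))"
    by (simp add: noise_kernel_def inner_vec_eq_sum sum_distrib_left exp_sum prod_dividef)
  also have "\<dots> = (\<Prod>i\<in>UNIV. (1 + x $ i * y $ i * tanh t) / 2)"
    using cube_coord_mult[OF x y] by (intro prod.cong refl exp_div_two_cosh) auto
  finally show ?thesis .
qed

lemma sum_noise_kernel:
  fixes y :: "real^'n::finite"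
  assumes y: "y \<in> cube"
  shows "(\<Sum>x\<in>cube. noise_kernel t x y) = 1"
proof -
  have "(\<Sum>x\<in>cube. noise_kernel t x y) = (\<Sum>x\<in>cube. \<Prod>i\<in>UNIV. (1 + x $ i * y $ i * tanh t) / 2)"
    using y by (intro sum.cong refl noise_kernel_eq_prod)
  also have "\<dots> = (\<Prod>i\<in>(UNIV::'n set). 1)"
    by (subst sum_cube_prod) (simp add: field_simps)
  finally show ?thesis by simp
qed

lemma sum_noise_kernel_coord:
  fixes y :: "real^'n::finite"
  assumes y: "y \<in> cube"
  shows "(\<Sum>x\<in>cube. noise_kernel t x y * x $ j) = tanh t * y $ j"
proof -
  define h where "h = (\<lambda>i s. (if i = j then s else 1) * ((1 + s * y $ i * tanh t) / 2))"
  have "(\<Prod>i\<in>UNIV. h i (x $ i)) = noise_kernel t x y * x $ j" if x: "x \<in> cube" for x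
  proof -
    have "(\<Prod>i\<in>UNIV. h i (x $ i))
        = (\<Prod>i\<in>UNIV. if i = j then x $ i else 1) * (\<Prod>i\<in>UNIV. (1 + x $ i * y $ i * tanh t) / 2)"
      by (simp only: h_def prod.distrib)
    then show ?thesis by (simp add: prod.delta noise_kernel_eq_prod[OF x y])
  qed
  then have "(\<Sum>x\<in>cube. noise_kernel t x y * x $ j) = (\<Sum>x\<in>cube. \<Prod>i\<in>UNIV. h i (x $ i))"
    by simp
  also have "\<dots> = (\<Prod>i\<in>UNIV. h i 1 + h i (-1))" by (rule sum_cube_prod)
  also have "\<dots> = (h j 1 + h j (-1)) * 1 ^ (CARD('n) - 1)"
    by (rule prod_all_but_one) (simp add: h_def field_simps)
  finally show ?thesis by (simp add: h_def field_simps)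
qed

definition coupling_weight :: "real \<Rightarrow> real \<Rightarrow> real \<Rightarrow> real" where
  "coupling_weight t s u = (if u = 1 then (if s = 1 then 1/2 else tanh t / 2)
                             else (if s = 1 then 0 else (1 - tanh t) / 2))"

text \<open>For fixed \<open>y \<in> cube\<close> and \<open>t > 0\<close>, \<open>coupling t y\<close> is a joint law of \<open>(x, \<sigma>)\<close> in which \<open>x\<close> has
  law \<open>noise_kernel t \<cdot> y\<close>, \<open>\<sigma>\<close> is uniform on the cube, and the conditional mean of \<open>\<sigma>\<close> given
  \<open>x\<close> is \<open>(x - tanh t \<cdot> y) / (1 + tanh t)\<close>; coordinatewise, \<open>\<sigma>\<^sub>i y\<^sub>i = -1\<close> forces \<open>x\<^sub>i y\<^sub>i = -1\<close>.\<close>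

definition coupling :: "real \<Rightarrow> real^'n \<Rightarrow> real^'n \<Rightarrow> real^'n \<Rightarrow> real" where
  "coupling t y x \<sigma> = (\<Prod>i\<in>UNIV. coupling_weight t (\<sigma> $ i * y $ i) (x $ i * y $ i))"

lemma coupling_nonneg: "t > 0 \<Longrightarrow> coupling t y x \<sigma> \<ge> 0"
  unfolding coupling_def coupling_weight_def
  using tanh_real_lt_1[of t] by (intro prod_nonneg) auto

lemma sum_coupling_fst:
  fixes \<sigma> y :: "real^'n::finite"
  assumes s: "\<sigma> \<in> cube" and y: "y \<in> cube"
  shows "(\<Sum>x\<in>cube. coupling t y x \<sigma>) = 1 / 2 ^ CARD('n)"
proof -
  have "(\<Sum>x\<in>cube. coupling t y x \<sigma>)
      = (\<Sum>x\<in>cube. \<Prod>i\<in>UNIV. (\<lambda>i s. coupling_weight t (\<sigma> $ i * y $ i) (s * y $ i)) i (x $ i))"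
    by (simp add: coupling_def)
  also have "\<dots> = (\<Prod>i\<in>UNIV. coupling_weight t (\<sigma> $ i * y $ i) (y $ i) + coupling_weight t (\<sigma> $ i * y $ i) (- y $ i))"
    by (subst sum_cube_prod) simp
  also have "\<dots> = (\<Prod>i\<in>(UNIV::'n set). 1/2)"
    using cube_coord[OF y] cube_coord_mult[OF s y]
    by (intro prod.cong refl) (auto simp: coupling_weight_def field_simps)
  finally show ?thesis by (simp add: power_one_over)
qed

lemma coupling_mean:
  fixes x y :: "real^'n::finite"
  assumes x: "x \<in> cube" and y: "y \<in> cube" and t: "t > 0"
  shows "(\<Sum>\<sigma>\<in>cube. coupling t y x \<sigma> * \<sigma> $ k) * (1 + tanh t) = noise_kernel t x y * (x $ k - tanh t * y $ k)"
proof -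
  define K where "K = (\<lambda>u. (1 + u * tanh t) / 2)"
  define u where "u = x $ k * y $ k"
  have d: "1 + tanh t > 0" using tanh_real_gt_neg1[of t] by simp
  have "(\<Sum>\<sigma>\<in>cube. coupling t y x \<sigma> * \<sigma> $ k)
      = (\<Sum>\<sigma>\<in>cube. \<Prod>i\<in>UNIV. (\<lambda>i s. (if i = k then s else 1) * coupling_weight t (s * y $ i) (x $ i * y $ i)) i (\<sigma> $ i))"
    by (simp add: coupling_def prod.distrib prod.delta mult.commute)
  also have "\<dots> = (\<Prod>i\<in>UNIV. coupling_weight t (y $ i) (x $ i * y $ i)
                   + (if i = k then -1 else 1) * coupling_weight t (- y $ i) (x $ i * y $ i))"
    by (subst sum_cube_prod) simp
  also have "\<dots> = (\<Prod>i\<in>UNIV. if i = k then K (x $ k * y $ k) * (y $ k * (u - tanh t) / (1 + tanh t))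
                                 else K (x $ i * y $ i))"
  proof (intro prod.cong refl)
    fix i
    show "coupling_weight t (y $ i) (x $ i * y $ i) + (if i = k then -1 else 1) * coupling_weight t (- y $ i) (x $ i * y $ i)
        = (if i = k then K (x $ k * y $ k) * (y $ k * (u - tanh t) / (1 + tanh t)) else K (x $ i * y $ i))"
      using cube_coord[OF y, of i] cube_coord_mult[OF x y, of i] d unfolding u_def
      by (cases "i = k") (auto simp: coupling_weight_def K_def field_simps)
  qed
  also have "\<dots> = (y $ k * (u - tanh t) / (1 + tanh t)) * noise_kernel t x y"
    unfolding noise_kernel_eq_prod[OF x y] K_def by (subst prod_update_mult) (simp add: mult_ac)
  finally have e: "(\<Sum>\<sigma>\<in>cube. coupling t y x \<sigma> * \<sigma> $ k) = (y $ k * (u - tanh t) / (1 + tanh t)) * noise_kernel t x y" .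
  have "y $ k * (u - tanh t) = x $ k - tanh t * y $ k"
    unfolding u_def using cube_coord_sq[OF y, of k] by (simp add: algebra_simps)
  then show ?thesis unfolding e using d by simp
qed

lemma coupling_bound:
  fixes y :: "real^'n::finite" and F :: "real^'n \<Rightarrow> real^'n"
  assumes t: "t > 0" and y: "y \<in> cube"
    and FS: "\<And>x \<sigma>. x \<in> cube \<Longrightarrow> \<sigma> \<in> cube \<Longrightarrow> F x \<bullet> \<sigma> \<le> S \<sigma>"
  shows "(\<Sum>x\<in>cube. F x \<bullet> (noise_kernel t x y *\<^sub>R (x - tanh t *\<^sub>R y)))
           \<le> (1 + tanh t) / 2 ^ CARD('n) * (\<Sum>\<sigma>\<in>cube. S \<sigma>)"
proof -
  have vec: "noise_kernel t x y *\<^sub>R (x - tanh t *\<^sub>R y) = (\<Sum>\<sigma>\<in>cube. ((1 + tanh t) * coupling t y x \<sigma>) *\<^sub>R \<sigma>)"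
    if x: "x \<in> cube" for x
    using coupling_mean[OF x y t]
    by (simp add: vec_eq_iff sum_component sum_distrib_left sum_distrib_right mult_ac)
  have "(\<Sum>x\<in>cube. F x \<bullet> (noise_kernel t x y *\<^sub>R (x - tanh t *\<^sub>R y)))
      = (\<Sum>x\<in>cube. \<Sum>\<sigma>\<in>cube. ((1 + tanh t) * coupling t y x \<sigma>) * (F x \<bullet> \<sigma>))"
    by (intro sum.cong refl) (simp add: vec inner_sum_right)
  also have "\<dots> \<le> (\<Sum>x\<in>cube. \<Sum>\<sigma>\<in>cube. ((1 + tanh t) * coupling t y x \<sigma>) * S \<sigma>)"
    using tanh_real_gt_neg1[of t] coupling_nonneg[OF t] FS
    by (intro sum_mono mult_left_mono) (auto intro!: mult_nonneg_nonneg)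
  also have "\<dots> = (\<Sum>\<sigma>\<in>cube. (1 + tanh t) * S \<sigma> * (\<Sum>x\<in>cube. coupling t y x \<sigma>))"
    by (subst sum.swap) (simp add: sum_distrib_left mult_ac)
  also have "\<dots> = (1 + tanh t) / 2 ^ CARD('n) * (\<Sum>\<sigma>\<in>cube. S \<sigma>)"
    using sum_coupling_fst[OF _ y] by (simp add: sum_distrib_left)
  finally show ?thesis .
qed

text \<open>\<open>obs_weight t p\<close> is the law of the noisy observation \<open>x\<close> of \<open>y \<sim> p\<close>; by Bayes' rule
  (\<open>obs_weight_mult_tilt\<close>) the posterior law of \<open>y\<close> given \<open>x\<close> is \<open>tilt (t *\<^sub>R x) p\<close>.\<close>

definition obs_weight :: "real \<Rightarrow> (real^'n \<Rightarrow> real) \<Rightarrow> real^'n \<Rightarrow> real" where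
  "obs_weight t p x = (\<Sum>z\<in>cube. p z * noise_kernel t x z)"

lemma obs_weight_nonneg: "(\<And>z. p z \<ge> 0) \<Longrightarrow> obs_weight t p x \<ge> 0"
  unfolding obs_weight_def by (intro sum_nonneg mult_nonneg_nonneg noise_kernel_nonneg) auto

lemma sum_obs_weight:
  fixes p :: "real^'n::finite \<Rightarrow> real"
  assumes "(\<Sum>z\<in>cube. p z) = 1"
  shows "(\<Sum>x\<in>cube. obs_weight t p x) = 1"
proof -
  have "(\<Sum>x\<in>cube. obs_weight t p x) = (\<Sum>z\<in>cube. p z * (\<Sum>x\<in>cube. noise_kernel t x z))"
    unfolding obs_weight_def by (subst sum.swap) (simp add: sum_distrib_left)
  also have "\<dots> = 1"
    using assms by (simp add: sum_noise_kernel)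
  finally show ?thesis .
qed

lemma obs_weight_mult_tilt:
  fixes x :: "real^'n::finite"
  assumes nn: "\<And>z. p z \<ge> 0" and s1: "(\<Sum>z\<in>cube. p z) = 1" and supp: "\<And>z. z \<notin> cube \<Longrightarrow> p z = 0"
  shows "obs_weight t p x * tilt (t *\<^sub>R x) p y = p y * noise_kernel t x y"
proof (cases "y \<in> cube")
  case True
  define Z where "Z = (\<Sum>z\<in>cube. p z * exp (t * (x \<bullet> z)))"
  have Z: "Z > 0" unfolding Z_def using tilt_normaliser_pos[OF nn s1, of "t *\<^sub>R x"] by simp
  have "obs_weight t p x = Z / (2 * cosh t) ^ CARD('n)"
    by (simp add: obs_weight_def Z_def noise_kernel_def sum_divide_distrib)
  then show ?thesis using True Z
    by (simp add: tilt_def Z_def[symmetric] noise_kernel_def)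
qed (simp add: supp tilt_def)

definition post_mean_gvec :: "real \<Rightarrow> (real^'n \<Rightarrow> real) \<Rightarrow> real^'n \<Rightarrow> real^'n" where
  "post_mean_gvec t p x = (\<Sum>y\<in>cube. tilt (t *\<^sub>R x) p y *\<^sub>R gvec p y)"

definition post_cov_trace :: "real \<Rightarrow> (real^'n \<Rightarrow> real) \<Rightarrow> real^'n \<Rightarrow> real" where
  "post_cov_trace t p x = (\<Sum>i\<in>UNIV. cube_cov (tilt (t *\<^sub>R x) p) (\<lambda>y. gvec p y $ i) (\<lambda>y. y $ i))"

lemma trace_Hcov_tilt_le:
  fixes x :: "real^'n::finite"
  assumes nn: "\<And>z. p z \<ge> 0" and s1: "(\<Sum>z\<in>cube. p z) = 1" and x: "x \<in> cube" and t: "t > 0"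
  shows "(\<Sum>i\<in>UNIV. Hcov (tilt (t *\<^sub>R x) p) $ i $ i) \<le> exp (2 * t) * post_cov_trace t p x"
  unfolding post_cov_trace_def sum_distrib_left
proof (intro sum_mono)
  fix i
  have "1 / exp (2 * t) \<le> 1" "1 \<le> exp (2 * t)" using t by simp_all
  then have "1 / exp (2 * t) \<le> exp (2 * t)" by linarith
  moreover have "exp (- (2 * t)) = 1 / exp (2 * t)" by (simp add: exp_minus field_simps)
  ultimately have "max (exp (2 * (t *\<^sub>R x) $ i)) (1 / exp (2 * (t *\<^sub>R x) $ i)) = exp (2 * t)"
    using cube_coord[OF x, of i] by (auto simp: max_def)
  then show "Hcov (tilt (t *\<^sub>R x) p) $ i $ i
      \<le> exp (2 * t) * cube_cov (tilt (t *\<^sub>R x) p) (\<lambda>y. gvec p y $ i) (\<lambda>y. y $ i)"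
    using Hcov_tilt_diag_le[OF nn tilt_normaliser_pos[OF nn s1], of "t *\<^sub>R x" i] by simp
qed

lemma obs_weight_mult_post_cov_trace:
  fixes p :: "real^'n::finite \<Rightarrow> real"
  assumes nn: "\<And>z. p z \<ge> 0" and s1: "(\<Sum>z\<in>cube. p z) = 1" and supp: "\<And>z. z \<notin> cube \<Longrightarrow> p z = 0"
  shows "obs_weight t p x * post_cov_trace t p x
     = (\<Sum>y\<in>cube. p y * noise_kernel t x y * (gvec p y \<bullet> y))
       - post_mean_gvec t p x \<bullet> (\<Sum>y\<in>cube. (p y * noise_kernel t x y) *\<^sub>R y)"
proof -
  define \<rho> where "\<rho> = tilt (t *\<^sub>R x) p"
  define u where "u = gvec p"
  define W where "W = obs_weight t p x"
  define F where "F = post_mean_gvec t p x"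
  define J where "J = (\<lambda>y. p y * noise_kernel t x y)"
  define B where "B = (\<Sum>y\<in>cube. J y *\<^sub>R y)"
  have WJ: "W * \<rho> y = J y" for y
    unfolding \<rho>_def J_def W_def by (rule obs_weight_mult_tilt[OF nn s1 supp])
  have p1: "W * (\<Sum>y\<in>cube. \<rho> y * u y $ i * y $ i) = (\<Sum>y\<in>cube. J y * (u y $ i * y $ i))" for i
    by (simp add: WJ[symmetric] sum_distrib_left mult.assoc)
  have p2: "W * (\<Sum>y\<in>cube. \<rho> y * y $ i) = B $ i" for i
    by (simp add: B_def sum_component WJ[symmetric] sum_distrib_left mult.assoc)
  have F: "F $ i = (\<Sum>y\<in>cube. \<rho> y * u y $ i)" for i
    by (simp add: F_def post_mean_gvec_def \<rho>_def u_def sum_component)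
  have "W * post_cov_trace t p x = (\<Sum>i\<in>UNIV. W * (\<Sum>y\<in>cube. \<rho> y * u y $ i * y $ i)
        - (\<Sum>y\<in>cube. \<rho> y * u y $ i) * (W * (\<Sum>y\<in>cube. \<rho> y * y $ i)))"
    unfolding post_cov_trace_def cube_cov_def \<rho>_def u_def
    by (subst sum_distrib_left) (rule sum.cong, simp_all add: algebra_simps)
  also have "\<dots> = (\<Sum>i\<in>UNIV. (\<Sum>y\<in>cube. J y * (u y $ i * y $ i)) - F $ i * B $ i)"
    unfolding p1 p2 F by simp
  also have "\<dots> = (\<Sum>y\<in>cube. J y * (u y \<bullet> y)) - F \<bullet> B"
    by (simp add: sum_subtractf inner_vec_eq_sum sum_distrib_left) (rule sum.swap)
  finally show ?thesis by (simp add: W_def J_def u_def F_def B_def)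
qed

lemma sum_post_mean_gvec_inner_obs:
  fixes p :: "real^'n::finite \<Rightarrow> real"
  assumes nn: "\<And>z. p z \<ge> 0" and s1: "(\<Sum>z\<in>cube. p z) = 1" and supp: "\<And>z. z \<notin> cube \<Longrightarrow> p z = 0"
  shows "(\<Sum>x\<in>cube. post_mean_gvec t p x \<bullet> (obs_weight t p x *\<^sub>R x))
     = tanh t * (\<Sum>y\<in>cube. p y * (gvec p y \<bullet> y))"
proof -
  have "(\<Sum>x\<in>cube. post_mean_gvec t p x \<bullet> (obs_weight t p x *\<^sub>R x))
      = (\<Sum>x\<in>cube. \<Sum>y\<in>cube. p y * noise_kernel t x y * (gvec p y \<bullet> x))"
    by (simp add: post_mean_gvec_def inner_sum_left obs_weight_mult_tilt[OF nn s1 supp, symmetric]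
        sum_distrib_left mult_ac)
  also have "\<dots> = (\<Sum>y\<in>cube. p y * (gvec p y \<bullet> (\<Sum>x\<in>cube. noise_kernel t x y *\<^sub>R x)))"
    by (subst sum.swap) (simp add: inner_sum_right sum_distrib_left mult_ac)
  also have "\<dots> = (\<Sum>y\<in>cube. p y * (gvec p y \<bullet> (tanh t *\<^sub>R y)))"
  proof (intro sum.cong refl)
    fix y :: "real^'n" assume y: "y \<in> cube"
    have "(\<Sum>x\<in>cube. noise_kernel t x y *\<^sub>R x) = tanh t *\<^sub>R y"
      using sum_noise_kernel_coord[OF y] by (simp add: vec_eq_iff sum_component)
    then show "p y * (gvec p y \<bullet> (\<Sum>x\<in>cube. noise_kernel t x y *\<^sub>R x)) = p y * (gvec p y \<bullet> (tanh t *\<^sub>R y))"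
      by simp
  qed
  also have "\<dots> = tanh t * (\<Sum>y\<in>cube. p y * (gvec p y \<bullet> y))"
    by (simp add: sum_distrib_left mult_ac)
  finally show ?thesis .
qed

text \<open>With \<open>y \<sim> p\<close>, \<open>x \<sim> noise_kernel t \<cdot> y\<close> and \<open>\<tau> = tanh t\<close>, both sides equal
  \<open>\<tau> (E[g(y) \<bullet> y] - E[E[g(y) | x] \<bullet> E[y | x]])\<close>; for the right-hand side use \<open>E[x | y] = \<tau> y\<close>.\<close>

lemma post_cov_trace_identity:
  fixes p :: "real^'n::finite \<Rightarrow> real"
  assumes nn: "\<And>z. p z \<ge> 0" and s1: "(\<Sum>z\<in>cube. p z) = 1" and supp: "\<And>z. z \<notin> cube \<Longrightarrow> p z = 0"
  shows "tanh t * (\<Sum>x\<in>cube. obs_weight t p x * post_cov_trace t p x) =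
     (\<Sum>y\<in>cube. p y * (\<Sum>x\<in>cube. post_mean_gvec t p x \<bullet> (noise_kernel t x y *\<^sub>R (x - tanh t *\<^sub>R y))))"
proof -
  define F where "F = post_mean_gvec t p"
  define J where "J = (\<lambda>x y. p y * noise_kernel t x y)"
  define B where "B = (\<lambda>x. \<Sum>y\<in>cube. J x y *\<^sub>R y)"
  define G where "G = (\<Sum>y\<in>cube. p y * (gvec p y \<bullet> y))"
  have "(\<Sum>x\<in>cube. \<Sum>y\<in>cube. J x y * (gvec p y \<bullet> y)) = G"
    by (subst sum.swap) (simp add: J_def G_def sum_distrib_left[symmetric] mult_ac sum_noise_kernel
        flip: sum_distrib_right)
  then have lhs: "(\<Sum>x\<in>cube. obs_weight t p x * post_cov_trace t p x) = G - (\<Sum>x\<in>cube. F x \<bullet> B x)"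
    by (simp add: obs_weight_mult_post_cov_trace[OF nn s1 supp] sum_subtractf J_def F_def B_def)
  have "(\<Sum>y\<in>cube. p y * (\<Sum>x\<in>cube. F x \<bullet> (noise_kernel t x y *\<^sub>R (x - tanh t *\<^sub>R y))))
     = (\<Sum>x\<in>cube. \<Sum>y\<in>cube. J x y * (F x \<bullet> x) - tanh t * (J x y * (F x \<bullet> y)))"
    by (subst sum.swap) (simp add: sum_distrib_left J_def inner_diff_right algebra_simps)
  also have "\<dots> = (\<Sum>x\<in>cube. F x \<bullet> (obs_weight t p x *\<^sub>R x)) - tanh t * (\<Sum>x\<in>cube. F x \<bullet> B x)"
    by (simp add: sum_subtractf sum_distrib_right[symmetric] sum_distrib_left[symmetric] B_def
        inner_sum_right J_def obs_weight_def)
  also have "(\<Sum>x\<in>cube. F x \<bullet> (obs_weight t p x *\<^sub>R x)) = tanh t * G"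
    unfolding F_def G_def by (rule sum_post_mean_gvec_inner_obs[OF nn s1 supp])
  also have "tanh t * G - tanh t * (\<Sum>x\<in>cube. F x \<bullet> B x) = tanh t * (G - (\<Sum>x\<in>cube. F x \<bullet> B x))"
    by (simp add: right_diff_distrib)
  finally show ?thesis unfolding lhs F_def ..
qed

definition gvec_support :: "(real^'n \<Rightarrow> real) \<Rightarrow> real^'n \<Rightarrow> real" where
  "gvec_support p v = Max ((\<lambda>k. k \<bullet> v) ` (gvec p ` cube))"

lemma gvec_support_ge: "y \<in> cube \<Longrightarrow> gvec p y \<bullet> v \<le> gvec_support p v"
  unfolding gvec_support_def by (intro Max_ge) auto

lemma gvec_support_average_bounds:
  fixes p :: "real^'n::finite \<Rightarrow> real"
  assumes nn: "\<And>z. p z \<ge> 0"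
  shows "0 \<le> (\<Sum>\<sigma>\<in>cube. gvec_support p \<sigma>) / 2 ^ CARD('n)"
    and "(\<Sum>\<sigma>\<in>cube. gvec_support p \<sigma>) / 2 ^ CARD('n) \<le> 2 * GW (gvec p ` cube)"
proof -
  define A where "A = (\<Sum>\<sigma>\<in>cube. gvec_support p \<sigma>) / 2 ^ CARD('n)"
  obtain y0 :: "real^'n" where y0: "y0 \<in> cube" using cube_nonempty by blast
  have "0 = (\<Sum>\<sigma>\<in>cube. gvec p y0 \<bullet> \<sigma>)"
    by (simp add: inner_vec_eq_sum sum_distrib_left[symmetric] sum_cube_coord flip: sum.swap)
  also have "\<dots> \<le> (\<Sum>\<sigma>\<in>cube. gvec_support p \<sigma>)"
    using y0 by (intro sum_mono gvec_support_ge)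
  finally show A0: "0 \<le> A" unfolding A_def by simp
  have "sqrt (2/pi) * (\<Sum>\<sigma>\<in>cube. Max ((\<lambda>k. k \<bullet> \<sigma>) ` (gvec p ` cube))) / 2 ^ CARD('n) \<le> GW (gvec p ` cube)"
    by (rule GW_ge_cube_sum_Max) (use cube_nonempty abs_gvec_le_1[of p, OF nn] in auto)
  then have "sqrt (2/pi) * A \<le> GW (gvec p ` cube)" by (simp add: A_def gvec_support_def)
  moreover have "1/2 \<le> sqrt (2/pi)"
  proof -
    have "1/4 \<le> 2/pi" using pi_less_4 pi_gt_zero by (simp add: field_simps)
    then have "sqrt (1/4) \<le> sqrt (2/pi)" by (rule real_sqrt_le_mono)
    then show ?thesis by (simp add: real_sqrt_divide)
  qed
  ultimately show "A \<le> 2 * GW (gvec p ` cube)"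
    using A0 mult_right_mono[of "1/2" "sqrt (2/pi)" A] by linarith
qed

lemma expected_trace_Hcov_tilt_le:
  fixes p :: "real^'n::finite \<Rightarrow> real"
  assumes nn: "\<And>z. p z \<ge> 0" and s1: "(\<Sum>z\<in>cube. p z) = 1" and supp: "\<And>z. z \<notin> cube \<Longrightarrow> p z = 0"
    and t: "t > 0"
  shows "(\<Sum>x\<in>cube. obs_weight t p x * (\<Sum>i\<in>UNIV. Hcov (tilt (t *\<^sub>R x) p) $ i $ i))
     \<le> exp (2 * t) * (1 + tanh t) / tanh t * ((\<Sum>\<sigma>\<in>cube. gvec_support p \<sigma>) / 2 ^ CARD('n))"
proof -
  have \<tau>: "tanh t > 0" using t by simp
  have F_le: "post_mean_gvec t p x \<bullet> \<sigma> \<le> gvec_support p \<sigma>" if "x \<in> cube" "\<sigma> \<in> cube" for x \<sigma>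
  proof -
    have Z: "(\<Sum>z\<in>cube. p z * exp ((t *\<^sub>R x) \<bullet> z)) > 0" by (rule tilt_normaliser_pos[OF nn s1])
    have "post_mean_gvec t p x \<bullet> \<sigma> = (\<Sum>y\<in>cube. tilt (t *\<^sub>R x) p y * (gvec p y \<bullet> \<sigma>))"
      by (simp add: post_mean_gvec_def inner_sum_left)
    also have "\<dots> \<le> (\<Sum>y\<in>cube. tilt (t *\<^sub>R x) p y * gvec_support p \<sigma>)"
      using tilt_nonneg[OF nn Z] gvec_support_ge by (intro sum_mono mult_left_mono) auto
    also have "\<dots> = gvec_support p \<sigma>" using sum_tilt[OF Z] by (simp add: sum_distrib_right[symmetric])
    finally show ?thesis .
  qed
  have "tanh t * (\<Sum>x\<in>cube. obs_weight t p x * post_cov_trace t p x)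
      = (\<Sum>y\<in>cube. p y * (\<Sum>x\<in>cube. post_mean_gvec t p x \<bullet> (noise_kernel t x y *\<^sub>R (x - tanh t *\<^sub>R y))))"
    by (rule post_cov_trace_identity[OF nn s1 supp])
  also have "\<dots> \<le> (\<Sum>y\<in>cube. p y * ((1 + tanh t) / 2 ^ CARD('n) * (\<Sum>\<sigma>\<in>cube. gvec_support p \<sigma>)))"
    using coupling_bound[where F="post_mean_gvec t p" and S="gvec_support p", OF t _ F_le] nn
    by (intro sum_mono mult_left_mono) auto
  also have "\<dots> = (\<Sum>y\<in>cube. p y) * ((1 + tanh t) / 2 ^ CARD('n) * (\<Sum>\<sigma>\<in>cube. gvec_support p \<sigma>))"
    by (simp only: sum_distrib_right)
  also have "\<dots> = (1 + tanh t) * ((\<Sum>\<sigma>\<in>cube. gvec_support p \<sigma>) / 2 ^ CARD('n))"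
    using s1 by simp
  finally have cov: "(\<Sum>x\<in>cube. obs_weight t p x * post_cov_trace t p x)
      \<le> (1 + tanh t) / tanh t * ((\<Sum>\<sigma>\<in>cube. gvec_support p \<sigma>) / 2 ^ CARD('n))"
    using \<tau> by (simp add: field_simps)
  have "obs_weight t p x * (\<Sum>i\<in>UNIV. Hcov (tilt (t *\<^sub>R x) p) $ i $ i)
      \<le> obs_weight t p x * (exp (2 * t) * post_cov_trace t p x)" if "x \<in> cube" for x
    using trace_Hcov_tilt_le[OF nn s1 that t] obs_weight_nonneg[of p, OF nn] by (rule mult_left_mono)
  then have "(\<Sum>x\<in>cube. obs_weight t p x * (\<Sum>i\<in>UNIV. Hcov (tilt (t *\<^sub>R x) p) $ i $ i))
      \<le> exp (2 * t) * (\<Sum>x\<in>cube. obs_weight t p x * post_cov_trace t p x)"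
    by (subst sum_distrib_left, intro sum_mono) (simp add: mult_ac)
  also have "\<dots> \<le> exp (2 * t) * ((1 + tanh t) / tanh t * ((\<Sum>\<sigma>\<in>cube. gvec_support p \<sigma>) / 2 ^ CARD('n)))"
    using cov by (intro mult_left_mono) auto
  finally show ?thesis by (simp add: mult_ac)
qed

lemma tanh_ge_half:
  fixes e :: real
  assumes "0 < e" "e \<le> 1/4"
  shows "e / 2 \<le> tanh e"
proof -
  define a where "a = exp e"
  have a: "a > 0" by (simp add: a_def)
  have "a * a = exp (2 * e)" by (simp add: a_def exp_add[symmetric])
  then have a2: "a * a \<ge> 1 + 2 * e" using exp_ge_add_one_self[of "2 * e"] by simp
  have "(2 - e) * (a * a) \<ge> (2 - e) * (1 + 2 * e)" using a2 assms by (intro mult_left_mono) auto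
  moreover have "(2 - e) * (1 + 2 * e) \<ge> 2 + e" using assms by (simp add: algebra_simps)
  ultimately have key: "e * (a * a + 1) \<le> 2 * (a * a - 1)" by (simp add: algebra_simps)
  have "tanh e = (a * a - 1) / (a * a + 1)"
  proof -
    have n: "a - 1 / a = (a * a - 1) / a" and d: "a + 1 / a = (a * a + 1) / a"
      using a by (simp_all add: field_simps)
    have "tanh e = (a - 1 / a) / (a + 1 / a)"
      by (simp add: tanh_altdef a_def exp_minus divide_inverse)
    also have "\<dots> = (a * a - 1) / (a * a + 1)"
      unfolding n d using a by (simp add: divide_divide_eq_left)
    finally show ?thesis .
  qed
  moreover have "e / 2 \<le> (a * a - 1) / (a * a + 1)"
  proof -
    have "a * a + 1 > 0" by (simp add: add_nonneg_pos)
    then show ?thesis using key by (simp add: le_divide_eq mult.commute)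
  qed
  ultimately show ?thesis by simp
qed

lemma exp_tanh_factor_le:
  fixes \<epsilon> :: real
  assumes \<epsilon>: "0 < \<epsilon>" "\<epsilon> \<le> 1/4"
  shows "exp (2 * \<epsilon>) * (1 + tanh \<epsilon>) / tanh \<epsilon> \<le> 8 / \<epsilon>"
proof -
  have \<tau>: "\<epsilon> / 2 \<le> tanh \<epsilon>" "tanh \<epsilon> < 1" "tanh \<epsilon> > 0"
    using tanh_ge_half[OF \<epsilon>] tanh_real_lt_1 \<epsilon> by auto
  have "exp (2 * \<epsilon>) \<le> 2" using exp_bound_half[of "2 * \<epsilon>"] \<epsilon> by simp
  moreover have "1 / tanh \<epsilon> \<le> 2 / \<epsilon>" using \<tau> \<epsilon> by (simp add: field_simps)
  ultimately have "exp (2 * \<epsilon>) * (1 + tanh \<epsilon>) * (1 / tanh \<epsilon>) \<le> 2 * 2 * (2 / \<epsilon>)"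
    using \<tau> by (intro mult_mono) auto
  then show ?thesis by simp
qed

lemma expected_trace_Hcov_tilt_le_GW:
  fixes \<nu> :: "(real^'n::finite) pmf"
  assumes supp: "set_pmf \<nu> \<subseteq> cube" and \<epsilon>: "0 < \<epsilon>" "\<epsilon> \<le> 1/4"
  shows "(\<Sum>x\<in>cube. obs_weight \<epsilon> (pmf \<nu>) x * (\<Sum>i\<in>UNIV. Hcov (tilt (\<epsilon> *\<^sub>R x) (pmf \<nu>)) $ i $ i))
     \<le> 2^8 * GW (gvec (pmf \<nu>) ` cube) / \<epsilon>"
proof -
  define p where "p = pmf \<nu>"
  have nn: "\<And>z. p z \<ge> 0" by (simp add: p_def)
  have s1: "(\<Sum>z\<in>cube. p z) = 1" unfolding p_def by (rule sum_pmf_eq_1[OF finite_cube supp])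
  have sp: "\<And>z. z \<notin> cube \<Longrightarrow> p z = 0" using supp by (auto simp: p_def set_pmf_eq)
  note A = gvec_support_average_bounds[of p, OF nn]
  have "(\<Sum>x\<in>cube. obs_weight \<epsilon> p x * (\<Sum>i\<in>UNIV. Hcov (tilt (\<epsilon> *\<^sub>R x) p) $ i $ i))
      \<le> exp (2 * \<epsilon>) * (1 + tanh \<epsilon>) / tanh \<epsilon> * ((\<Sum>\<sigma>\<in>cube. gvec_support p \<sigma>) / 2 ^ CARD('n))"
    by (rule expected_trace_Hcov_tilt_le[OF nn s1 sp \<epsilon>(1)])
  also have "\<dots> \<le> (8 / \<epsilon>) * (2 * GW (gvec p ` cube))"
    using exp_tanh_factor_le[OF \<epsilon>] A \<epsilon> by (intro mult_mono) auto
  also have "\<dots> \<le> 2^8 * GW (gvec p ` cube) / \<epsilon>"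
  proof -
    have "0 \<le> GW (gvec p ` cube)" using A by linarith
    then show ?thesis using \<epsilon> by (simp add: field_simps)
  qed
  finally show ?thesis unfolding p_def .
qed

lemma Trk_eq_sorted:
  fixes A :: "real^'n^'n" and xs :: "'n list"
  assumes dis: "distinct xs" and st: "set xs = UNIV" and so: "sorted (rev (map (\<lambda>i. A $ i $ i) xs))"
  shows "Trk k A = (\<Sum>j\<in>{j\<in>{1..CARD('n)}. \<lceil>k\<rceil> \<le> int j}. A $ (xs ! (j - 1)) $ (xs ! (j - 1)))"
proof -
  define d where "d = (\<lambda>i. A $ i $ i)"
  have len: "length xs = CARD('n)" using distinct_card[OF dis] st by simp
  have M: "image_mset d (mset_set (UNIV :: 'n set)) = mset (map d xs)"
    using mset_set_set[OF dis] st by simp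
  have srt: "sort (map d xs) = rev (map d xs)"
    by (rule properties_for_sort) (use so in \<open>simp_all add: d_def\<close>)
  have "rev (sorted_list_of_multiset (image_mset d (mset_set (UNIV :: 'n set)))) = map d xs"
    unfolding M by (simp only: sorted_list_of_multiset_mset srt rev_rev_ident)
  then show ?thesis
    unfolding Trk_def Let_def d_def[symmetric]
    using len by (intro sum.cong refl) (auto simp: d_def)
qed

lemma exists_sorted_enumeration:
  fixes d :: "'n::finite \<Rightarrow> real"
  obtains xs where "distinct xs" "set xs = UNIV" "sorted (rev (map d xs))"
proof -
  obtain xs0 :: "'n list" where xs0: "set xs0 = UNIV" "distinct xs0"
    using finite_distinct_list[of "UNIV :: 'n set"] by auto
  show ?thesis
    by (rule that[of "rev (sort_key d xs0)"]) (use xs0 in \<open>simp_all add: rev_map[symmetric]\<close>)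
qed

lemma Trk_le_trace:
  fixes A :: "real^'n^'n"
  assumes nn: "\<And>i. A $ i $ i \<ge> 0"
  shows "Trk k A \<le> (\<Sum>i\<in>UNIV. A $ i $ i)"
proof -
  obtain xs where xs: "distinct xs" "set xs = UNIV" "sorted (rev (map (\<lambda>i. A $ i $ i) xs))"
    using exists_sorted_enumeration by blast
  have len: "length xs = CARD('n)" using distinct_card[OF xs(1)] xs(2) by simp
  have "Trk k A = (\<Sum>j\<in>{j\<in>{1..CARD('n)}. \<lceil>k\<rceil> \<le> int j}. A $ (xs ! (j - 1)) $ (xs ! (j - 1)))"
    by (rule Trk_eq_sorted[OF xs])
  also have "\<dots> \<le> (\<Sum>j\<in>{1..CARD('n)}. A $ (xs ! (j - 1)) $ (xs ! (j - 1)))"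
    using nn by (intro sum_mono2) auto
  also have "\<dots> = (\<Sum>j<CARD('n). A $ (xs ! j) $ (xs ! j))"
    using sum.atLeast1_atMost_eq[of "\<lambda>j. A $ (xs ! (j - 1)) $ (xs ! (j - 1))"] by simp
  also have "\<dots> = sum_list (map (\<lambda>i. A $ i $ i) xs)"
    by (simp add: sum_list_sum_nth len atLeast0LessThan)
  also have "\<dots> = (\<Sum>i\<in>UNIV. A $ i $ i)"
    using xs by (simp add: sum_list_distinct_conv_sum_set)
  finally show ?thesis .
qed

lemma sets_Trk_le:
  fixes A :: "'a \<Rightarrow> real^'n::finite^'n"
  assumes meas: "\<And>i. (\<lambda>\<theta>. A \<theta> $ i $ i) \<in> borel_measurable M"
  shows "{\<theta>\<in>space M. Trk k (A \<theta>) \<le> c} \<in> sets M"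
proof -
  define P where "P = {xs :: 'n list. distinct xs \<and> set xs = UNIV}"
  have finP: "finite P"
    unfolding P_def using distinct_card
    by (intro finite_subset[OF _ finite_lists_length_le[of "UNIV :: 'n set" "CARD('n)"]]) fastforce+
  define d where "d = (\<lambda>\<theta> i. A \<theta> $ i $ i)"
  have [measurable]: "(\<lambda>\<theta>. d \<theta> i) \<in> borel_measurable M" for i
    unfolding d_def by (rule meas)
  define Pc where "Pc = (\<lambda>xs. {\<theta>\<in>space M. (\<forall>i\<in>{..<CARD('n)}. \<forall>j\<in>{..<CARD('n)}. i \<le> j \<longrightarrow> d \<theta> (xs ! j) \<le> d \<theta> (xs ! i))
       \<and> (\<Sum>j\<in>{j\<in>{1..CARD('n)}. \<lceil>k\<rceil> \<le> int j}. d \<theta> (xs ! (j - 1))) \<le> c})"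
  have sorted_iff: "sorted (rev (map (d \<theta>) xs)) \<longleftrightarrow>
      (\<forall>i\<in>{..<CARD('n)}. \<forall>j\<in>{..<CARD('n)}. i \<le> j \<longrightarrow> d \<theta> (xs ! j) \<le> d \<theta> (xs ! i))"
    if "xs \<in> P" for xs \<theta>
  proof -
    have "length xs = CARD('n)" using that distinct_card[of xs] by (simp add: P_def)
    then show ?thesis unfolding sorted_rev_iff_nth_mono by auto
  qed
  have Trk_eq: "Trk k (A \<theta>) = (\<Sum>j\<in>{j\<in>{1..CARD('n)}. \<lceil>k\<rceil> \<le> int j}. d \<theta> (xs ! (j - 1)))"
    if "xs \<in> P" "sorted (rev (map (d \<theta>) xs))" for xs \<theta>
    using that unfolding d_def P_def by (intro Trk_eq_sorted) auto
  have "{\<theta>\<in>space M. Trk k (A \<theta>) \<le> c} = (\<Union>xs\<in>P. Pc xs)"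
  proof (intro set_eqI iffI)
    fix \<theta> assume \<theta>: "\<theta> \<in> {\<theta>\<in>space M. Trk k (A \<theta>) \<le> c}"
    obtain xs where xs: "distinct xs" "set xs = UNIV" "sorted (rev (map (d \<theta>) xs))"
      using exists_sorted_enumeration by blast
    then have "xs \<in> P" by (simp add: P_def)
    then show "\<theta> \<in> (\<Union>xs\<in>P. Pc xs)"
      using \<theta> xs(3) Trk_eq sorted_iff by (auto simp: Pc_def)
  next
    fix \<theta> assume "\<theta> \<in> (\<Union>xs\<in>P. Pc xs)"
    then show "\<theta> \<in> {\<theta>\<in>space M. Trk k (A \<theta>) \<le> c}"
      using Trk_eq sorted_iff by (auto simp: Pc_def)
  qed
  moreover have "Pc xs \<in> sets M" for xs
    unfolding Pc_def by measurable
  ultimately show ?thesis using finP by (simp add: sets.finite_UN)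
qed

lemma tilt_measurable [measurable]: "(\<lambda>\<theta>. tilt \<theta> p y) \<in> borel_measurable borel"
  unfolding tilt_def by measurable

lemma Hcov_tilt_measurable [measurable]:
  "(\<lambda>\<theta>. Hcov (tilt \<theta> p) $ i $ j) \<in> borel_measurable borel"
  unfolding Hcov_def gvec_def tilt_def Let_def vec_lambda_beta by measurable

definition obs_pmf :: "real \<Rightarrow> (real^'n) pmf \<Rightarrow> (real^'n) pmf" where
  "obs_pmf t \<nu> = embed_pmf (\<lambda>x. if x \<in> cube then obs_weight t (pmf \<nu>) x else 0)"

definition tilt_mixture :: "real \<Rightarrow> (real^'n) pmf \<Rightarrow> (real^'n) measure" where
  "tilt_mixture t \<nu> = distr (measure_pmf (obs_pmf t \<nu>)) borel (\<lambda>x. t *\<^sub>R x)"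

lemma pmf_obs_pmf:
  fixes \<nu> :: "(real^'n::finite) pmf"
  assumes supp: "set_pmf \<nu> \<subseteq> cube"
  shows "pmf (obs_pmf t \<nu>) x = (if x \<in> cube then obs_weight t (pmf \<nu>) x else 0)"
  unfolding obs_pmf_def
proof (rule pmf_embed_pmf)
  show "0 \<le> (if x \<in> cube then obs_weight t (pmf \<nu>) x else 0)" for x
    by (simp add: obs_weight_nonneg)
  have "(\<integral>\<^sup>+x. ennreal (if x \<in> cube then obs_weight t (pmf \<nu>) x else 0) \<partial>count_space UNIV)
      = (\<Sum>x\<in>cube. ennreal (if x \<in> cube then obs_weight t (pmf \<nu>) x else 0))"
    by (rule nn_integral_count_space') auto
  also have "\<dots> = ennreal (\<Sum>x\<in>cube. obs_weight t (pmf \<nu>) x)"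
    by (simp add: obs_weight_nonneg)
  also have "\<dots> = 1"
    by (simp add: sum_obs_weight sum_pmf_eq_1[OF finite_cube supp])
  finally show "(\<integral>\<^sup>+x. ennreal (if x \<in> cube then obs_weight t (pmf \<nu>) x else 0) \<partial>count_space UNIV) = 1" .
qed

lemma set_obs_pmf_subset: "set_pmf \<nu> \<subseteq> cube \<Longrightarrow> set_pmf (obs_pmf t \<nu>) \<subseteq> cube"
  by (auto simp: set_pmf_eq pmf_obs_pmf)

lemma sets_tilt_mixture [simp]: "sets (tilt_mixture t \<nu>) = sets borel"
  by (simp add: tilt_mixture_def)

lemma space_tilt_mixture [simp]: "space (tilt_mixture t \<nu>) = UNIV"
  by (simp add: tilt_mixture_def)

lemma prob_space_tilt_mixture: "prob_space (tilt_mixture t \<nu>)"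
  unfolding tilt_mixture_def by (rule prob_space.prob_space_distr) (simp_all add: prob_space_measure_pmf)

lemma integral_tilt_mixture:
  fixes \<nu> :: "(real^'n::finite) pmf"
  assumes supp: "set_pmf \<nu> \<subseteq> cube" and f: "f \<in> borel_measurable borel"
  shows "(\<integral>\<theta>. f \<theta> \<partial>tilt_mixture t \<nu>) = (\<Sum>x\<in>cube. obs_weight t (pmf \<nu>) x * f (t *\<^sub>R x))"
proof -
  have "(\<integral>\<theta>. f \<theta> \<partial>tilt_mixture t \<nu>) = (\<integral>x. f (t *\<^sub>R x) \<partial>measure_pmf (obs_pmf t \<nu>))"
    unfolding tilt_mixture_def by (rule integral_distr) (simp_all add: f)
  also have "\<dots> = (\<Sum>x\<in>cube. f (t *\<^sub>R x) * pmf (obs_pmf t \<nu>) x)"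
    by (rule integral_measure_pmf_real) (use set_obs_pmf_subset[OF supp] in auto)
  finally show ?thesis by (simp add: pmf_obs_pmf[OF supp] mult.commute)
qed

lemma measure_tilt_mixture:
  fixes \<nu> :: "(real^'n::finite) pmf"
  assumes supp: "set_pmf \<nu> \<subseteq> cube" and P: "P \<in> sets borel"
  shows "measure (tilt_mixture t \<nu>) P = (\<Sum>x\<in>{x\<in>cube. t *\<^sub>R x \<in> P}. obs_weight t (pmf \<nu>) x)"
proof -
  define Q where "Q = obs_pmf t \<nu>"
  have "measure (tilt_mixture t \<nu>) P = measure Q ((\<lambda>x. t *\<^sub>R x) -` P)"
    unfolding tilt_mixture_def Q_def by (subst measure_distr) (simp_all add: P)
  also have "\<dots> = measure Q ((\<lambda>x. t *\<^sub>R x) -` P \<inter> set_pmf Q)"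
    by (rule measure_Int_set_pmf[symmetric])
  also have "(\<lambda>x. t *\<^sub>R x) -` P \<inter> set_pmf Q = {x\<in>cube. t *\<^sub>R x \<in> P} \<inter> set_pmf Q"
    using set_obs_pmf_subset[OF supp] unfolding Q_def by auto
  also have "measure Q \<dots> = (\<Sum>x\<in>{x\<in>cube. t *\<^sub>R x \<in> P}. pmf Q x)"
    by (simp add: measure_Int_set_pmf measure_measure_pmf_finite)
  finally show ?thesis by (simp add: Q_def pmf_obs_pmf[OF supp])
qed

lemma emeasure_tilt_mixture_outside:
  fixes \<nu> :: "(real^'n::finite) pmf"
  assumes supp: "set_pmf \<nu> \<subseteq> cube" and t: "0 < t" "t \<le> 1"
  shows "emeasure (tilt_mixture t \<nu>) (UNIV - (cball 0 (t * sqrt (real CARD('n))) \<inter> unit_box)) = 0"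
proof -
  have "t *\<^sub>R x \<in> cball 0 (t * sqrt (real CARD('n))) \<inter> unit_box" if "x \<in> cube" for x :: "real^'n"
  proof -
    have "\<bar>t * x $ i\<bar> \<le> 1" for i using abs_cube_coord[OF that, of i] t by (simp add: abs_mult)
    then show ?thesis using norm_cube[OF that] t by (auto simp: unit_box_def abs_le_iff)
  qed
  then have "measure (measure_pmf (obs_pmf t \<nu>))
      ((\<lambda>x. t *\<^sub>R x) -` (UNIV - (cball 0 (t * sqrt (real CARD('n))) \<inter> unit_box))) = 0"
    using set_obs_pmf_subset[OF supp, of t] unfolding measure_pmf_zero_iff disjnt_def by blast
  moreover have "unit_box \<in> sets (borel :: (real^'n) measure)"
    unfolding unit_box_def by measurable
  ultimately show ?thesis
    unfolding tilt_mixture_def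
    by (subst emeasure_distr) (auto simp: measure_pmf.emeasure_eq_measure)
qed

lemma tilt_mixture_represents:
  fixes \<nu> :: "(real^'n::finite) pmf"
  assumes supp: "set_pmf \<nu> \<subseteq> cube"
  shows "(\<Sum>y\<in>cube. \<phi> y * pmf \<nu> y) = (\<integral>\<theta>. (\<Sum>y\<in>cube. \<phi> y * tilt \<theta> (pmf \<nu>) y) \<partial>tilt_mixture t \<nu>)"
proof -
  define p where "p = pmf \<nu>"
  have nn: "\<And>z. p z \<ge> 0" by (simp add: p_def)
  have s1: "(\<Sum>z\<in>cube. p z) = 1" unfolding p_def by (rule sum_pmf_eq_1[OF finite_cube supp])
  have sp: "\<And>z. z \<notin> cube \<Longrightarrow> p z = 0" using supp by (auto simp: p_def set_pmf_eq)
  have meas: "(\<lambda>\<theta>. \<Sum>y\<in>cube. \<phi> y * tilt \<theta> p y) \<in> borel_measurable borel"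
    by measurable
  have "(\<integral>\<theta>. (\<Sum>y\<in>cube. \<phi> y * tilt \<theta> p y) \<partial>tilt_mixture t \<nu>)
      = (\<Sum>x\<in>cube. \<Sum>y\<in>cube. \<phi> y * (obs_weight t p x * tilt (t *\<^sub>R x) p y))"
    unfolding integral_tilt_mixture[OF supp meas] by (simp add: p_def sum_distrib_left mult_ac)
  also have "\<dots> = (\<Sum>y\<in>cube. \<phi> y * p y * (\<Sum>x\<in>cube. noise_kernel t x y))"
    by (subst sum.swap) (simp add: obs_weight_mult_tilt[OF nn s1 sp] sum_distrib_left mult_ac)
  also have "\<dots> = (\<Sum>y\<in>cube. \<phi> y * p y)"
    by (simp add: sum_noise_kernel)
  finally show ?thesis by (simp add: p_def)
qed

lemma finite_Markov_inequality:
  fixes w g :: "'a \<Rightarrow> real"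
  assumes fin: "finite S" and TS: "T \<subseteq> S" and w: "\<And>x. x \<in> S \<Longrightarrow> w x \<ge> 0"
    and g: "\<And>x. x \<in> S \<Longrightarrow> g x \<ge> 0" and gT: "\<And>x. x \<in> T \<Longrightarrow> c < g x"
    and tot: "(\<Sum>x\<in>S. w x * g x) \<le> c / \<alpha>" and \<alpha>: "\<alpha> > 0"
  shows "(\<Sum>x\<in>T. w x) \<le> 1 / \<alpha>"
proof -
  have finT: "finite T" using finite_subset[OF TS fin] .
  have TS_le: "(\<Sum>x\<in>T. w x * g x) \<le> (\<Sum>x\<in>S. w x * g x)"
    using TS w g by (intro sum_mono2[OF fin]) auto
  have cT: "c * (\<Sum>x\<in>T. w x) \<le> (\<Sum>x\<in>T. w x * g x)"
    unfolding sum_distrib_left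
  proof (intro sum_mono)
    fix x assume x: "x \<in> T"
    have "w x \<ge> 0" using w TS x by auto
    then show "c * w x \<le> w x * g x" using gT[OF x] by (simp add: mult.commute mult_right_mono)
  qed
  have S0: "(\<Sum>x\<in>S. w x * g x) \<ge> 0" using w g by (intro sum_nonneg) auto
  show ?thesis
  proof (cases "c > 0")
    case True
    have "c * (\<Sum>x\<in>T. w x) \<le> c / \<alpha>" using cT TS_le tot by linarith
    then show ?thesis using True \<alpha> by (simp add: field_simps)
  next
    case False
    have "c / \<alpha> \<ge> 0" using S0 tot by linarith
    then have c0: "c = 0" using False \<alpha> by (simp add: zero_le_divide_iff)
    have nnT: "\<forall>x\<in>T. w x * g x \<ge> 0" using TS w g by (auto intro: mult_nonneg_nonneg)
    have "(\<Sum>x\<in>T. w x * g x) \<le> 0" using TS_le tot c0 by simp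
    moreover have "(\<Sum>x\<in>T. w x * g x) \<ge> 0" using nnT by (intro sum_nonneg) auto
    ultimately have "(\<Sum>x\<in>T. w x * g x) = 0" by linarith
    then have "\<forall>x\<in>T. w x * g x = 0"
      using sum_nonneg_eq_0_iff[OF finT, of "\<lambda>x. w x * g x"] nnT by blast
    then have "\<forall>x\<in>T. w x = 0" using gT c0 by fastforce
    then show ?thesis using \<alpha> by simp
  qed
qed

lemma measure_tilt_mixture_Trk_le:
  fixes \<nu> :: "(real^'n::finite) pmf"
  assumes supp: "set_pmf \<nu> \<subseteq> cube" and \<epsilon>: "0 < \<epsilon>" "\<epsilon> \<le> 1/4" and \<alpha>: "\<alpha> > 0"
  shows "1 - 1/\<alpha> \<le> measure (tilt_mixture \<epsilon> \<nu>)
           {\<theta>\<in>space (tilt_mixture \<epsilon> \<nu>). Trk k (Hcov (tilt \<theta> (pmf \<nu>))) \<le> 2^8 * \<alpha> * GW (gvec (pmf \<nu>) ` cube) / \<epsilon>}"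
proof -
  define p where "p = pmf \<nu>"
  have nn: "\<And>z. p z \<ge> 0" by (simp add: p_def)
  have s1: "(\<Sum>z\<in>cube. p z) = 1" unfolding p_def by (rule sum_pmf_eq_1[OF finite_cube supp])
  define c where "c = 2^8 * \<alpha> * GW (gvec p ` cube) / \<epsilon>"
  define P where "P = {\<theta>. Trk k (Hcov (tilt \<theta> p)) \<le> c}"
  define tr where "tr = (\<lambda>x. \<Sum>i\<in>UNIV. Hcov (tilt (\<epsilon> *\<^sub>R x) p) $ i $ i)"
  define T where "T = {x\<in>cube. \<epsilon> *\<^sub>R x \<notin> P}"
  have P: "P \<in> sets borel"
    using sets_Trk_le[where A="\<lambda>\<theta>. Hcov (tilt \<theta> p)" and M=borel and k=k and c=c]
    by (simp add: P_def Hcov_tilt_measurable)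
  have T: "T \<subseteq> cube" "{x\<in>cube. \<epsilon> *\<^sub>R x \<in> P} = cube - T" by (auto simp: T_def)
  have meq: "measure (tilt_mixture \<epsilon> \<nu>) P = 1 - (\<Sum>x\<in>T. obs_weight \<epsilon> p x)"
    unfolding measure_tilt_mixture[OF supp P] T(2) p_def[symmetric]
    using T(1) by (simp add: sum_diff sum_obs_weight[OF s1])
  have "(\<Sum>x\<in>T. obs_weight \<epsilon> p x) \<le> 1 / \<alpha>"
  proof (rule finite_Markov_inequality[OF finite_cube T(1), where g=tr and c=c])
    show "\<And>x. 0 \<le> obs_weight \<epsilon> p x" by (rule obs_weight_nonneg[of p, OF nn])
    show "\<And>x. 0 \<le> tr x" unfolding tr_def using Hcov_tilt_diag_nonneg[OF nn s1] by (simp add: sum_nonneg)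
    show "c < tr x" if "x \<in> T" for x
    proof -
      have "\<not> Trk k (Hcov (tilt (\<epsilon> *\<^sub>R x) p)) \<le> c" using that by (simp add: T_def P_def)
      moreover have "Trk k (Hcov (tilt (\<epsilon> *\<^sub>R x) p)) \<le> tr x"
        unfolding tr_def by (rule Trk_le_trace) (rule Hcov_tilt_diag_nonneg[OF nn s1])
      ultimately show ?thesis by linarith
    qed
    show "(\<Sum>x\<in>cube. obs_weight \<epsilon> p x * tr x) \<le> c / \<alpha>"
      using expected_trace_Hcov_tilt_le_GW[OF supp \<epsilon>] \<alpha> unfolding tr_def c_def p_def by simp
  qed (use \<alpha> in simp)
  then show ?thesis using meq by (simp add: P_def p_def c_def)
qed

theorem proposition3p6:
  fixes \<nu> :: "(real^'n) pmf"
  assumes "set_pmf \<nu> \<subseteq> cube"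
  shows "\<forall>\<epsilon> \<alpha>. 0 < \<epsilon> \<and> \<epsilon> < 1/16 \<and> 1 < \<alpha> \<longrightarrow>
    (let n = real CARD('n); D = GW (gvec (pmf \<nu>) ` cube) in
     (\<exists>m :: (real^'n) measure.
        sets m = sets borel \<and> finite_measure m \<and>
        emeasure m (UNIV - (cball 0 (\<epsilon> * sqrt n) \<inter> unit_box)) = 0 \<and>
        (\<forall>\<phi> :: real^'n \<Rightarrow> real.
           (\<Sum>y\<in>cube. \<phi> y * pmf \<nu> y)
             = (\<integral>\<theta>. (\<Sum>y\<in>cube. \<phi> y * tilt \<theta> (pmf \<nu>) y) \<partial>m)) \<and>
        measure m {\<theta>\<in>space m. Trk (2 * n * exp (- 1 / (32 * \<epsilon>\<^sup>2))) (Hcov (tilt \<theta> (pmf \<nu>)))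
                                 \<le> 2^8 * \<alpha> * D / \<epsilon>} \<ge> 1 - 1/\<alpha> - 1/n \<and>
        (0 < D \<and> \<epsilon> \<le> 1 / (8 * sqrt (ln (4 * n / D))) \<longrightarrow>
          measure m {\<theta>\<in>space m. Trk 1 (Hcov (tilt \<theta> (pmf \<nu>))) \<le> 2^8 * \<alpha> * D / \<epsilon>}
            \<ge> 1 - 1/\<alpha> - 1/n)))"
  apply (intro allI impI)
  subgoal for \<epsilon> \<alpha>
  proof -
    assume "0 < \<epsilon> \<and> \<epsilon> < 1/16 \<and> 1 < \<alpha>"
    then have \<epsilon>: "0 < \<epsilon>" "\<epsilon> \<le> 1/4" and \<alpha>: "0 < \<alpha>" by auto
    define m where "m = tilt_mixture \<epsilon> \<nu>"
    have "0 \<le> 1 / real CARD('n)" by simp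
    then have "1 - 1/\<alpha> - 1 / real CARD('n) \<le> measure m
        {\<theta>\<in>space m. Trk k (Hcov (tilt \<theta> (pmf \<nu>))) \<le> 2^8 * \<alpha> * GW (gvec (pmf \<nu>) ` cube) / \<epsilon>}" for k
      using measure_tilt_mixture_Trk_le[OF assms \<epsilon> \<alpha>, of k] unfolding m_def by linarith
    moreover have "sets m = sets borel" "finite_measure m"
      "emeasure m (UNIV - (cball 0 (\<epsilon> * sqrt (real CARD('n))) \<inter> unit_box)) = 0"
      "\<And>\<phi>. (\<Sum>y\<in>cube. \<phi> y * pmf \<nu> y) = (\<integral>\<theta>. (\<Sum>y\<in>cube. \<phi> y * tilt \<theta> (pmf \<nu>) y) \<partial>m)"
      unfolding m_def using prob_space_tilt_mixture[THEN prob_space.finite_measure] \<epsilon>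
      by (simp_all add: emeasure_tilt_mixture_outside[OF assms] tilt_mixture_represents[OF assms])
    ultimately show ?thesis unfolding Let_def by blast
  qed
  done

end
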